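(* Let $c^\star:\Delta(S)\to[0,\infty]$ be grounded, convex and lower semi-continuous (the objective output-distribution cost), and let $\succeq$ be an unbounded moral-hazard preference with parsimonious representation $(c,u)$. Then $\succeq$ is overconfident if and only if $c(p)\le c^\star(p)$ for all $p\in\Delta(S)$, and $\succeq$ is optimistic if and only if $c$ is up-shifted from $c^\star$.
   Context: $S=\{s_1<\dots<s_{|S|}\}$ finite totally ordered, $\Delta(S)$ its simplex. $\Pi\subseteq\mathbb{R}$ convex; $\Delta(\Pi)$ finite-support distributions on $\Pi$; contracts $w:S\to\Delta(\Pi)$, set $W$; constant contracts identified with elements of $\Delta(\Pi)$; mixtures are probability mixtures. $u$ extends to $\Delta(\Pi)$ by expectation. Fixed reference prizes $\pi_0<\pi_1$; normalised means $\{u(\pi_0),u(\pi_1)\}=\{0,1\}$; grounded means infimum $0$. "$p$ FOSD $q$" means $\sum_{s\ge t}p(s)\ge\sum_{s\ge t}q(s)$ for all $t\in S$. A parsimonious representation of $\succeq$ is a pair $(c,u)$ with $c:\Delta(S)\to[0,\infty]$ grounded, convex, lsc and $u:\Pi\to\mathbb{R}$ strictly increasing and normalised, such that $w\succeq w'$ iff $\max_{p}[-c(p)+\sum_s u(w(s))p(s)]\ge\max_p[-c(p)+\sum_s u(w'(s))p(s)]$; a moral-hazard preference is one admitting such a representation. $\succeq$ is unbounded iff there are $x\succ y$ in $\Delta(\Pi)$ such that for every $\alpha\in(0,1)$ there exist $z,z'\in\Delta(\Pi)$ with $y\succ\alpha z+(1-\alpha)x$ and $\alpha z'+(1-\alpha)y\succ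 x$. More confident: $\succeq$ is more confident than $\succeq'$ iff for all $w\in W$ and constant $x\in\Delta(\Pi)$, $w\succeq'x\Rightarrow w\succeq x$ and $w\succ'x\Rightarrow w\succ x$. Steeper: $w$ is $\succeq$-steeper than $w'$ iff $\tfrac12w(s)+\tfrac12w'(s')\succeq\tfrac12w(s')+\tfrac12w'(s)$ for all $s\ge s'$. More optimistic: $\succeq$ is more optimistic than $\succeq'$ iff whenever $w$ is $\succeq$-steeper than $w'$, $w\succeq'w'\Rightarrow w\succeq w'$ and $w\succ'w'\Rightarrow w\succ w'$. Up-shifted: $c$ is up-shifted from $c'$ iff for any $p,p'\in\Delta(S)$ there exist $q,q'\in\Delta(S)$ with $p$ FOSD $q'$, $q$ FOSD $p'$, $\tfrac12p+\tfrac12p'=\tfrac12q+\tfrac12q'$, and $c(q)+c'(q')\le c(p)+c'(p')$. Absolute notions: for a moral-hazard preference $\succeq$ with (unique normalised, strictly increasing) utility $u$, let $\succeq^\star$ be the moral-hazard preference with parsimonious representation $(c^\star,u)$. $\succeq$ is overconfident iff it is more confident than $\succeq^\star$, and optimistic iff it is more optimistic than $\succeq^\star$. *)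

theory Defs
  imports "HOL-Analysis.Analysis" "HOL-Probability.Probability_Mass_Function"
begin

definition DeltaS :: "('s::finite \<Rightarrow> real) set" where
  "DeltaS = {p. (\<forall>s. 0 \<le> p s) \<and> (\<Sum>s\<in>UNIV. p s) = 1}"

definition fosd :: "('s::{finite,linorder} \<Rightarrow> real) \<Rightarrow> ('s \<Rightarrow> real) \<Rightarrow> bool" where
  "fosd p q \<longleftrightarrow> (\<forall>t. (\<Sum>s\<in>{s. s \<ge> t}. p s) \<ge> (\<Sum>s\<in>{s. s \<ge> t}. q s))"

definition cost_fun :: "(('s::finite \<Rightarrow> real) \<Rightarrow> ereal) \<Rightarrow> bool" where
  "cost_fun c \<longleftrightarrow> (\<forall>p\<in>DeltaS. 0 \<le> c p)"

definition grounded :: "(('s::finite \<Rightarrow> real) \<Rightarrow> ereal) \<Rightarrow> bool" where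
  "grounded c \<longleftrightarrow> (INF p\<in>DeltaS. c p) = 0"

definition convex_cost :: "(('s::finite \<Rightarrow> real) \<Rightarrow> ereal) \<Rightarrow> bool" where
  "convex_cost c \<longleftrightarrow> (\<forall>p\<in>DeltaS. \<forall>q\<in>DeltaS. \<forall>t::real. 0 \<le> t \<and> t \<le> 1 \<longrightarrow>
      c (\<lambda>s. t * p s + (1 - t) * q s) \<le> ereal t * c p + ereal (1 - t) * c q)"

(* lower semicontinuity on Delta(S) (sequential; Delta(S) is a compact subset of R^S) *)
definition lsc_cost :: "(('s::finite \<Rightarrow> real) \<Rightarrow> ereal) \<Rightarrow> bool" where
  "lsc_cost c \<longleftrightarrow> (\<forall>p\<in>DeltaS. \<forall>X. (\<forall>n. X n \<in> DeltaS) \<and> X \<longlonglongrightarrow> p \<longrightarrow>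
      c p \<le> liminf (\<lambda>n. c (X n)))"

definition admissible_cost :: "(('s::finite \<Rightarrow> real) \<Rightarrow> ereal) \<Rightarrow> bool" where
  "admissible_cost c \<longleftrightarrow> cost_fun c \<and> grounded c \<and> convex_cost c \<and> lsc_cost c"

definition lotteries :: "real set \<Rightarrow> real pmf set" where
  "lotteries Prizes = {x. finite (set_pmf x) \<and> set_pmf x \<subseteq> Prizes}"

definition lot_mix :: "real \<Rightarrow> 'a pmf \<Rightarrow> 'a pmf \<Rightarrow> 'a pmf" where
  "lot_mix a x y = bind_pmf (bernoulli_pmf a) (\<lambda>b. if b then x else y)"

definition contracts :: "real set \<Rightarrow> ('s \<Rightarrow> real pmf) set" where
  "contracts Prizes = {w. \<forall>s. w s \<in> lotteries Prizes}"

definition const_contract :: "real pmf \<Rightarrow> ('s \<Rightarrow> real pmf)" where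
  "const_contract x = (\<lambda>_. x)"

definition EU :: "(real \<Rightarrow> real) \<Rightarrow> real pmf \<Rightarrow> real" where
  "EU u x = (\<Sum>y\<in>set_pmf x. pmf x y * u y)"

definition rep_value :: "(('s::finite \<Rightarrow> real) \<Rightarrow> ereal) \<Rightarrow> (real \<Rightarrow> real) \<Rightarrow> ('s \<Rightarrow> real pmf) \<Rightarrow> ereal" where
  "rep_value c u w = (SUP p\<in>DeltaS. - c p + ereal (\<Sum>s\<in>UNIV. EU u (w s) * p s))"

definition rep_pref :: "(('s::finite \<Rightarrow> real) \<Rightarrow> ereal) \<Rightarrow> (real \<Rightarrow> real) \<Rightarrow> ('s \<Rightarrow> real pmf) \<Rightarrow> ('s \<Rightarrow> real pmf) \<Rightarrow> bool" where
  "rep_pref c u w w' \<longleftrightarrow> rep_value c u w' \<le> rep_value c u w"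

definition normalised :: "real \<Rightarrow> real \<Rightarrow> (real \<Rightarrow> real) \<Rightarrow> bool" where
  "normalised pi0 pi1 u \<longleftrightarrow> {u pi0, u pi1} = {0, 1}"

definition parsimonious_rep ::
  "real set \<Rightarrow> real \<Rightarrow> real \<Rightarrow> (('s::finite \<Rightarrow> real pmf) \<Rightarrow> ('s \<Rightarrow> real pmf) \<Rightarrow> bool)
   \<Rightarrow> (('s \<Rightarrow> real) \<Rightarrow> ereal) \<Rightarrow> (real \<Rightarrow> real) \<Rightarrow> bool" where
  "parsimonious_rep Prizes pi0 pi1 R c u \<longleftrightarrow>
     admissible_cost c \<and> strict_mono_on Prizes u \<and> normalised pi0 pi1 u \<and>
     (\<forall>w\<in>contracts Prizes. \<forall>w'\<in>contracts Prizes. R w w' \<longleftrightarrow> rep_value c u w' \<le> rep_value c u w)"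

definition moral_hazard :: "real set \<Rightarrow> real \<Rightarrow> real \<Rightarrow> (('s::finite \<Rightarrow> real pmf) \<Rightarrow> ('s \<Rightarrow> real pmf) \<Rightarrow> bool) \<Rightarrow> bool" where
  "moral_hazard Prizes pi0 pi1 R \<longleftrightarrow> (\<exists>c u. parsimonious_rep Prizes pi0 pi1 R c u)"

definition strict_pref :: "('w \<Rightarrow> 'w \<Rightarrow> bool) \<Rightarrow> 'w \<Rightarrow> 'w \<Rightarrow> bool" where
  "strict_pref R w w' \<longleftrightarrow> R w w' \<and> \<not> R w' w"

definition unbounded :: "real set \<Rightarrow> (('s \<Rightarrow> real pmf) \<Rightarrow> ('s \<Rightarrow> real pmf) \<Rightarrow> bool) \<Rightarrow> bool" where
  "unbounded Prizes R \<longleftrightarrow> (\<exists>x\<in>lotteries Prizes. \<exists>y\<in>lotteries Prizes. strict_pref R (const_contract x) (const_contract y) \<and>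
     (\<forall>a. 0 < a \<and> a < 1 \<longrightarrow> (\<exists>z\<in>lotteries Prizes. \<exists>z'\<in>lotteries Prizes.
         strict_pref R (const_contract y) (const_contract (lot_mix a z x)) \<and> strict_pref R (const_contract (lot_mix a z' y)) (const_contract x))))"

definition more_confident :: "real set \<Rightarrow> (('s \<Rightarrow> real pmf) \<Rightarrow> ('s \<Rightarrow> real pmf) \<Rightarrow> bool)
   \<Rightarrow> (('s \<Rightarrow> real pmf) \<Rightarrow> ('s \<Rightarrow> real pmf) \<Rightarrow> bool) \<Rightarrow> bool" where
  "more_confident Prizes R R' \<longleftrightarrow> (\<forall>w\<in>contracts Prizes. \<forall>x\<in>lotteries Prizes.
     (R' w (const_contract x) \<longrightarrow> R w (const_contract x)) \<and> (strict_pref R' w (const_contract x) \<longrightarrow> strict_pref R w (const_contract x)))"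

definition steeper :: "(('s::linorder \<Rightarrow> real pmf) \<Rightarrow> ('s \<Rightarrow> real pmf) \<Rightarrow> bool)
   \<Rightarrow> ('s \<Rightarrow> real pmf) \<Rightarrow> ('s \<Rightarrow> real pmf) \<Rightarrow> bool" where
  "steeper R w w' \<longleftrightarrow> (\<forall>s s'. s \<ge> s' \<longrightarrow>
     R (const_contract (lot_mix (1/2) (w s) (w' s'))) (const_contract (lot_mix (1/2) (w s') (w' s))))"

definition more_optimistic :: "real set \<Rightarrow> (('s::linorder \<Rightarrow> real pmf) \<Rightarrow> ('s \<Rightarrow> real pmf) \<Rightarrow> bool)
   \<Rightarrow> (('s \<Rightarrow> real pmf) \<Rightarrow> ('s \<Rightarrow> real pmf) \<Rightarrow> bool) \<Rightarrow> bool" where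
  "more_optimistic Prizes R R' \<longleftrightarrow> (\<forall>w\<in>contracts Prizes. \<forall>w'\<in>contracts Prizes. steeper R w w' \<longrightarrow>
     (R' w w' \<longrightarrow> R w w') \<and> (strict_pref R' w w' \<longrightarrow> strict_pref R w w'))"

definition up_shifted :: "(('s::{finite,linorder} \<Rightarrow> real) \<Rightarrow> ereal) \<Rightarrow> (('s \<Rightarrow> real) \<Rightarrow> ereal) \<Rightarrow> bool" where
  "up_shifted c c' \<longleftrightarrow> (\<forall>p\<in>DeltaS. \<forall>p'\<in>DeltaS. \<exists>q\<in>DeltaS. \<exists>q'\<in>DeltaS.
     fosd p q' \<and> fosd q p' \<and> (\<lambda>s. p s / 2 + p' s / 2) = (\<lambda>s. q s / 2 + q' s / 2) \<and>
     c q + c' q' \<le> c p + c' p')"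

(* Absolute notions: compare with the preference represented by (cstar, u), u the
   (unique) utility of R; stated for every u of a parsimonious representation of R. *)
definition overconfident :: "real set \<Rightarrow> real \<Rightarrow> real \<Rightarrow> (('s::finite \<Rightarrow> real pmf) \<Rightarrow> ('s \<Rightarrow> real pmf) \<Rightarrow> bool)
   \<Rightarrow> (('s \<Rightarrow> real) \<Rightarrow> ereal) \<Rightarrow> bool" where
  "overconfident Prizes pi0 pi1 R cstar \<longleftrightarrow>
     (\<forall>c u. parsimonious_rep Prizes pi0 pi1 R c u \<longrightarrow> more_confident Prizes R (rep_pref cstar u))"

definition optimistic :: "real set \<Rightarrow> real \<Rightarrow> real \<Rightarrow> (('s::{finite,linorder} \<Rightarrow> real pmf) \<Rightarrow> ('s \<Rightarrow> real pmf) \<Rightarrow> bool)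
   \<Rightarrow> (('s \<Rightarrow> real) \<Rightarrow> ereal) \<Rightarrow> bool" where
  "optimistic Prizes pi0 pi1 R cstar \<longleftrightarrow>
     (\<forall>c u. parsimonious_rep Prizes pi0 pi1 R c u \<longrightarrow> more_optimistic Prizes R (rep_pref cstar u))"

end

theory Submission
  imports Defs
begin

text \<open>Through the representation, \<open>R\<close> compares contracts by the value
  \<open>V\<^sub>c a = max\<^sub>p \<langle>a, p\<rangle> - c p\<close> of their utility profiles \<open>a = u \<circ> w\<close>. Unboundedness makes every
  \<open>a \<in> \<real>\<^sup>S\<close> such a profile and pins down the normalised \<open>u\<close>, so the benchmark preference uses
  the same \<open>u\<close>. Overconfidence then says \<open>V\<^sub>c\<^sub>* \<le> V\<^sub>c\<close>, which by convex duality (separate a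
  point from the closed convex epigraph of \<open>c\<close>) is \<open>c \<le> c\<^sup>*\<close>. Steepness says \<open>a - a'\<close> is
  increasing, so optimism says \<open>V\<^sub>c\<close> has larger increments than \<open>V\<^sub>c\<^sub>*\<close> along increasing
  directions. By summation by parts increasing directions are dual to first-order stochastic
  dominance, and a second separation argument, on the set of exchanges \<open>(q, q')\<close> of
  \<open>(p, p')\<close> with \<open>q\<close> dominating \<open>p'\<close> and \<open>q + q' = p + p'\<close>, shows this is equivalent to
  \<open>c\<close> being up-shifted from \<open>c\<^sup>*\<close>.\<close>

lemma pmf_lot_mix:
  assumes "0 \<le> a" "a \<le> 1"
  shows "pmf (lot_mix a x y) z = a * pmf x z + (1 - a) * pmf y z"
proof -
  have "pmf (lot_mix a x y) z = (\<integral>b. pmf (if b then x else y) z \<partial>measure_pmf (bernoulli_pmf a))"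
    unfolding lot_mix_def pmf_bind by simp
  also have "\<dots> = (\<Sum>b\<in>UNIV. pmf (if b then x else y) z * pmf (bernoulli_pmf a) b)"
    by (rule integral_measure_pmf_real) auto
  also have "\<dots> = a * pmf x z + (1 - a) * pmf y z"
    using assms by (simp add: UNIV_bool)
  finally show ?thesis .
qed

lemma set_pmf_lot_mix_subset: "set_pmf (lot_mix a x y) \<subseteq> set_pmf x \<union> set_pmf y"
  unfolding lot_mix_def by (auto split: if_splits)

lemma lot_mix_in_lotteries: "x \<in> lotteries P \<Longrightarrow> y \<in> lotteries P \<Longrightarrow> lot_mix a x y \<in> lotteries P"
  unfolding lotteries_def using set_pmf_lot_mix_subset[of a x y] by (auto intro: finite_subset)

lemma return_pmf_in_lotteries: "z \<in> P \<Longrightarrow> return_pmf z \<in> lotteries P"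
  unfolding lotteries_def by auto

lemma const_contract_in_contracts: "x \<in> lotteries P \<Longrightarrow> const_contract x \<in> contracts P"
  unfolding contracts_def const_contract_def by auto

lemma EU_eq_sum_superset:
  assumes "finite A" "set_pmf x \<subseteq> A"
  shows "EU u x = (\<Sum>y\<in>A. pmf x y * u y)"
  unfolding EU_def by (rule sum.mono_neutral_left) (use assms in \<open>auto simp: set_pmf_eq\<close>)

lemma EU_return_pmf: "EU u (return_pmf z) = u z"
  unfolding EU_def by simp

lemma EU_lot_mix:
  assumes "x \<in> lotteries P" "y \<in> lotteries P" "0 \<le> a" "a \<le> 1"
  shows "EU u (lot_mix a x y) = a * EU u x + (1 - a) * EU u y"
proof -
  let ?A = "set_pmf x \<union> set_pmf y"
  have A: "finite ?A" using assms(1,2) unfolding lotteries_def by auto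
  have "EU u (lot_mix a x y) = (\<Sum>z\<in>?A. pmf (lot_mix a x y) z * u z)"
    by (rule EU_eq_sum_superset[OF A set_pmf_lot_mix_subset])
  also have "\<dots> = (\<Sum>z\<in>?A. a * (pmf x z * u z) + (1 - a) * (pmf y z * u z))"
    using assms(3,4) by (simp add: pmf_lot_mix algebra_simps)
  also have "\<dots> = a * (\<Sum>z\<in>?A. pmf x z * u z) + (1 - a) * (\<Sum>z\<in>?A. pmf y z * u z)"
    by (simp add: sum.distrib sum_distrib_left)
  also have "\<dots> = a * EU u x + (1 - a) * EU u y"
    using EU_eq_sum_superset[OF A, of x u] EU_eq_sum_superset[OF A, of y u] by auto
  finally show ?thesis .
qed

section \<open>The value of a cost function\<close>

definition dot :: "('s::finite \<Rightarrow> real) \<Rightarrow> ('s \<Rightarrow> real) \<Rightarrow> real" where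
  "dot a p = (\<Sum>s\<in>UNIV. a s * p s)"

definition proper_cost :: "(('s::finite \<Rightarrow> real) \<Rightarrow> ereal) \<Rightarrow> bool" where
  "proper_cost c \<longleftrightarrow> (\<forall>p\<in>DeltaS. 0 \<le> c p) \<and> (\<exists>p\<in>DeltaS. c p < \<infinity>)"

text \<open>For proper costs the supremum is finite (\<open>SUP_value_eq\<close>); otherwise
  \<open>real_of_ereal\<close> returns a junk value.\<close>

definition value_fun :: "(('s::finite \<Rightarrow> real) \<Rightarrow> ereal) \<Rightarrow> ('s \<Rightarrow> real) \<Rightarrow> real" where
  "value_fun c a = real_of_ereal (SUP p\<in>DeltaS. - c p + ereal (dot a p))"

lemma DeltaS_le_1: "p \<in> DeltaS \<Longrightarrow> 0 \<le> p s \<and> p s \<le> 1"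
proof -
  assume p: "p \<in> DeltaS"
  hence "p s \<le> (\<Sum>s\<in>UNIV. p s)" unfolding DeltaS_def by (intro member_le_sum) auto
  thus ?thesis using p unfolding DeltaS_def by auto
qed

lemma DeltaS_mix:
  "p \<in> DeltaS \<Longrightarrow> q \<in> DeltaS \<Longrightarrow> 0 \<le> t \<Longrightarrow> t \<le> 1 \<Longrightarrow> (\<lambda>s. t * p s + (1 - t) * q s) \<in> DeltaS"
  unfolding DeltaS_def by (auto simp: sum.distrib sum_distrib_left[symmetric])

lemma abs_dot_le: "p \<in> DeltaS \<Longrightarrow> \<bar>dot a p\<bar> \<le> (\<Sum>s\<in>UNIV. \<bar>a s\<bar>)"
  unfolding dot_def
proof (rule order_trans[OF sum_abs sum_mono])
  fix s assume "p \<in> DeltaS"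
  hence "0 \<le> p s" "p s \<le> 1" using DeltaS_le_1 by auto
  thus "\<bar>a s * p s\<bar> \<le> \<bar>a s\<bar>" by (simp add: abs_mult mult_left_le)
qed

lemma dot_add_const: "p \<in> DeltaS \<Longrightarrow> dot (\<lambda>s. a s + k) p = dot a p + k"
  unfolding dot_def DeltaS_def by (simp add: algebra_simps sum.distrib sum_distrib_left[symmetric])

lemma proper_cost_finite: "proper_cost c \<Longrightarrow> p \<in> DeltaS \<Longrightarrow> c p < \<infinity> \<Longrightarrow> \<exists>x. c p = ereal x \<and> 0 \<le> x"
  unfolding proper_cost_def by (cases "c p") auto

lemma admissible_cost_proper: "admissible_cost c \<Longrightarrow> proper_cost c"
proof -
  assume "admissible_cost c"
  hence c: "cost_fun c" "grounded c" unfolding admissible_cost_def by auto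
  have "(INF p\<in>DeltaS. c p) < 1" using c(2) unfolding grounded_def by simp
  then obtain p where "p \<in> DeltaS" "c p < 1" by (auto simp: INF_less_iff)
  moreover have "(1::ereal) < \<infinity>" by simp
  ultimately show ?thesis using c(1) unfolding proper_cost_def cost_fun_def by (meson less_trans)
qed

lemma SUP_value_le:
  fixes c :: "('s::finite \<Rightarrow> real) \<Rightarrow> ereal"
  assumes "proper_cost c" "\<And>p x. p \<in> DeltaS \<Longrightarrow> c p = ereal x \<Longrightarrow> dot a p - x \<le> K"
  shows "(SUP p\<in>DeltaS. - c p + ereal (dot a p)) \<le> ereal K"
proof (rule SUP_least)
  fix p :: "'s \<Rightarrow> real" assume p: "p \<in> DeltaS"
  have "0 \<le> c p" using assms(1) p unfolding proper_cost_def by auto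
  thus "- c p + ereal (dot a p) \<le> ereal K"
    using assms(2)[OF p] by (cases "c p") auto
qed

lemma SUP_value_eq:
  assumes "proper_cost c"
  shows "(SUP p\<in>DeltaS. - c p + ereal (dot a p)) = ereal (value_fun c a)"
proof -
  obtain p x where p: "p \<in> DeltaS" "c p = ereal x"
    using assms proper_cost_finite unfolding proper_cost_def by blast
  have "- c p + ereal (dot a p) \<le> (SUP p\<in>DeltaS. - c p + ereal (dot a p))"
    using p(1) by (rule SUP_upper)
  hence "(SUP p\<in>DeltaS. - c p + ereal (dot a p)) \<noteq> -\<infinity>" using p(2) by auto
  moreover have "(SUP p\<in>DeltaS. - c p + ereal (dot a p)) \<le> ereal (\<Sum>s\<in>UNIV. \<bar>a s\<bar>)"
  proof (rule SUP_value_le[OF assms])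
    fix q y assume q: "q \<in> DeltaS" "c q = ereal y"
    have "0 \<le> y" using assms q unfolding proper_cost_def by force
    thus "dot a q - y \<le> (\<Sum>s\<in>UNIV. \<bar>a s\<bar>)" using abs_dot_le[OF q(1), of a] by linarith
  qed
  ultimately show ?thesis unfolding value_fun_def by (cases "SUP p\<in>DeltaS. - c p + ereal (dot a p)") auto
qed

lemma value_fun_ge: "proper_cost c \<Longrightarrow> p \<in> DeltaS \<Longrightarrow> c p = ereal x \<Longrightarrow> dot a p - x \<le> value_fun c a"
  using SUP_upper[of p DeltaS "\<lambda>p. - c p + ereal (dot a p)"] SUP_value_eq[of c a] by simp

lemma value_fun_le:
  "proper_cost c \<Longrightarrow> (\<And>p x. p \<in> DeltaS \<Longrightarrow> c p = ereal x \<Longrightarrow> dot a p - x \<le> K) \<Longrightarrow> value_fun c a \<le> K"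
  using SUP_value_le[of c a K] SUP_value_eq[of c a] by simp

lemma value_fun_add_const:
  assumes "proper_cost c"
  shows "value_fun c (\<lambda>s. a s + k) = value_fun c a + k"
proof (rule antisym)
  show "value_fun c (\<lambda>s. a s + k) \<le> value_fun c a + k"
    by (rule value_fun_le[OF assms]) (use value_fun_ge[OF assms] dot_add_const in fastforce)
  have "value_fun c a \<le> value_fun c (\<lambda>s. a s + k) - k"
    by (rule value_fun_le[OF assms])
       (use value_fun_ge[OF assms, of _ _ "\<lambda>s. a s + k"] dot_add_const in fastforce)
  thus "value_fun c a + k \<le> value_fun c (\<lambda>s. a s + k)" by simp
qed

lemma value_fun_const:
  assumes "admissible_cost c"
  shows "value_fun c (\<lambda>s. k) = k"
proof -
  have c: "proper_cost c" "grounded c"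
    using assms admissible_cost_proper unfolding admissible_cost_def by auto
  have dot_const: "p \<in> DeltaS \<Longrightarrow> dot (\<lambda>s. k) p = k" for p
    unfolding dot_def DeltaS_def by (simp add: sum_distrib_left[symmetric])
  show ?thesis
  proof (rule antisym)
    show "value_fun c (\<lambda>s. k) \<le> k"
    proof (rule value_fun_le[OF c(1)])
      fix p x assume p: "p \<in> DeltaS" "c p = ereal x"
      hence "0 \<le> x" using c(1) unfolding proper_cost_def by force
      thus "dot (\<lambda>s. k) p - x \<le> k" using dot_const[OF p(1)] by simp
    qed
    show "k \<le> value_fun c (\<lambda>s. k)"
    proof (rule field_le_epsilon)
      fix e :: real assume "0 < e"
      hence "(INF p\<in>DeltaS. c p) < ereal e" using c(2) unfolding grounded_def by simp
      then obtain p where p: "p \<in> DeltaS" "c p < ereal e" by (auto simp: INF_less_iff)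
      have "0 \<le> c p" using c(1) p(1) unfolding proper_cost_def by auto
      then obtain x where x: "c p = ereal x" using p(2) by (cases "c p") auto
      have "k - x \<le> value_fun c (\<lambda>s. k)" using value_fun_ge[OF c(1) p(1) x, of "\<lambda>s. k"] dot_const[OF p(1)] by simp
      thus "k \<le> value_fun c (\<lambda>s. k) + e" using p(2) x by simp
    qed
  qed
qed

lemma value_fun_antimono:
  assumes "proper_cost c" "proper_cost c'" "\<forall>p\<in>DeltaS. c p \<le> c' p"
  shows "value_fun c' a \<le> value_fun c a"
proof (rule value_fun_le[OF assms(2)])
  fix p x assume p: "p \<in> DeltaS" "c' p = ereal x"
  have "0 \<le> c p" "c p \<le> ereal x" using assms(1,3) p unfolding proper_cost_def by auto
  then obtain y where y: "c p = ereal y" "y \<le> x" by (cases "c p") auto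
  thus "dot a p - x \<le> value_fun c a" using value_fun_ge[OF assms(1) p(1) y(1), of a] by simp
qed

definition utility_profile :: "(real \<Rightarrow> real) \<Rightarrow> ('s \<Rightarrow> real pmf) \<Rightarrow> ('s \<Rightarrow> real)" where
  "utility_profile u w = (\<lambda>s. EU u (w s))"

lemma utility_profile_const: "utility_profile u (const_contract x) = (\<lambda>s. EU u x)"
  unfolding utility_profile_def const_contract_def by simp

lemma rep_value_eq_value_fun:
  "proper_cost c \<Longrightarrow> rep_value c u w = ereal (value_fun c (utility_profile u w))"
  using SUP_value_eq[of c "utility_profile u w"] unfolding rep_value_def utility_profile_def dot_def
  by simp

lemma rep_pref_iff_value_fun:
  "proper_cost c \<Longrightarrow>
    rep_pref c u w w' \<longleftrightarrow> value_fun c (utility_profile u w') \<le> value_fun c (utility_profile u w)"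
  unfolding rep_pref_def by (simp add: rep_value_eq_value_fun)

lemma parsimonious_rep_iff_value_fun:
  assumes "parsimonious_rep P pi0 pi1 R c u" "w \<in> contracts P" "w' \<in> contracts P"
  shows "R w w' \<longleftrightarrow> value_fun c (utility_profile u w') \<le> value_fun c (utility_profile u w)"
proof -
  have "proper_cost c" using assms(1) admissible_cost_proper unfolding parsimonious_rep_def by blast
  thus ?thesis using assms unfolding parsimonious_rep_def by (simp add: rep_value_eq_value_fun)
qed

lemma parsimonious_rep_const_iff_EU:
  assumes "parsimonious_rep P pi0 pi1 R c u" "x \<in> lotteries P" "y \<in> lotteries P"
  shows "R (const_contract x) (const_contract y) \<longleftrightarrow> EU u y \<le> EU u x"
proof -
  have "admissible_cost c" using assms(1) unfolding parsimonious_rep_def by blast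
  thus ?thesis
    using parsimonious_rep_iff_value_fun[OF assms(1) const_contract_in_contracts[OF assms(2)]
        const_contract_in_contracts[OF assms(3)]]
    by (simp add: utility_profile_const value_fun_const)
qed

lemma parsimonious_rep_strict_const_iff_EU:
  assumes "parsimonious_rep P pi0 pi1 R c u" "x \<in> lotteries P" "y \<in> lotteries P"
  shows "strict_pref R (const_contract x) (const_contract y) \<longleftrightarrow> EU u y < EU u x"
  using parsimonious_rep_const_iff_EU[OF assms(1,2,3)] parsimonious_rep_const_iff_EU[OF assms(1,3,2)]
  unfolding strict_pref_def by auto

lemma steeper_iff_mono_diff:
  assumes "parsimonious_rep P pi0 pi1 R c u" "w \<in> contracts P" "w' \<in> contracts P"
  shows "steeper R w w' \<longleftrightarrow> mono (\<lambda>s. utility_profile u w s - utility_profile u w' s)"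
proof -
  have lot: "w s \<in> lotteries P" "w' s \<in> lotteries P" for s
    using assms(2,3) unfolding contracts_def by auto
  have "R (const_contract (lot_mix (1/2) (w s) (w' s'))) (const_contract (lot_mix (1/2) (w s') (w' s)))
     \<longleftrightarrow> utility_profile u w s' - utility_profile u w' s' \<le> utility_profile u w s - utility_profile u w' s"
    for s s'
    using parsimonious_rep_const_iff_EU[OF assms(1) lot_mix_in_lotteries[OF lot(1) lot(2)]
        lot_mix_in_lotteries[OF lot(1) lot(2)]]
      EU_lot_mix[OF lot(1) lot(2), of "1/2"]
    unfolding utility_profile_def by auto
  thus ?thesis unfolding steeper_def mono_def by auto
qed

lemma unbounded_EU_below:
  assumes rep: "parsimonious_rep P pi0 pi1 R c u" and unb: "unbounded P R"
  shows "\<exists>z\<in>lotteries P. EU u z < K"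
proof -
  obtain x y where xy: "x \<in> lotteries P" "y \<in> lotteries P"
    "strict_pref R (const_contract x) (const_contract y)"
    and mix: "\<And>a. 0 < a \<Longrightarrow> a < 1 \<Longrightarrow> \<exists>z\<in>lotteries P.
         strict_pref R (const_contract y) (const_contract (lot_mix a z x))"
    using unb unfolding unbounded_def by blast
  define D where "D = EU u x - EU u y"
  have D: "D > 0" using parsimonious_rep_strict_const_iff_EU[OF rep xy(1,2)] xy(3) by (simp add: D_def)
  define a where "a = D / (\<bar>EU u x - K\<bar> + D + 1)"
  have a: "0 < a" "a < 1" using D by (auto simp: a_def field_simps)
  obtain z where z: "z \<in> lotteries P"
    "strict_pref R (const_contract y) (const_contract (lot_mix a z x))"
    using mix[OF a] by blast
  have "EU u (lot_mix a z x) < EU u y"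
    using parsimonious_rep_strict_const_iff_EU[OF rep xy(2) lot_mix_in_lotteries[OF z(1) xy(1)]] z(2)
    by simp
  hence "a * (EU u z - EU u x) < - D"
    using EU_lot_mix[OF z(1) xy(1), of a u] a by (simp add: D_def algebra_simps)
  hence "EU u z - EU u x < - (D / a)" using a by (simp add: field_simps)
  moreover have "D / a = \<bar>EU u x - K\<bar> + D + 1" using D by (simp add: a_def)
  ultimately have "EU u z < K" using abs_ge_self[of "EU u x - K"] D by linarith
  thus ?thesis using z(1) by blast
qed

lemma unbounded_EU_above:
  assumes rep: "parsimonious_rep P pi0 pi1 R c u" and unb: "unbounded P R"
  shows "\<exists>z\<in>lotteries P. K < EU u z"
proof -
  obtain x y where xy: "x \<in> lotteries P" "y \<in> lotteries P"
    "strict_pref R (const_contract x) (const_contract y)"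
    and mix: "\<And>a. 0 < a \<Longrightarrow> a < 1 \<Longrightarrow> \<exists>z\<in>lotteries P.
         strict_pref R (const_contract (lot_mix a z y)) (const_contract x)"
    using unb unfolding unbounded_def by blast
  define D where "D = EU u x - EU u y"
  have D: "D > 0" using parsimonious_rep_strict_const_iff_EU[OF rep xy(1,2)] xy(3) by (simp add: D_def)
  define a where "a = D / (\<bar>K - EU u y\<bar> + D + 1)"
  have a: "0 < a" "a < 1" using D by (auto simp: a_def field_simps)
  obtain z where z: "z \<in> lotteries P"
    "strict_pref R (const_contract (lot_mix a z y)) (const_contract x)"
    using mix[OF a] by blast
  have "EU u x < EU u (lot_mix a z y)"
    using parsimonious_rep_strict_const_iff_EU[OF rep lot_mix_in_lotteries[OF z(1) xy(2)] xy(1)] z(2)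
    by simp
  hence "D < a * (EU u z - EU u y)"
    using EU_lot_mix[OF z(1) xy(2), of a u] a by (simp add: D_def algebra_simps)
  hence "D / a < EU u z - EU u y" using a by (simp add: field_simps)
  moreover have "D / a = \<bar>K - EU u y\<bar> + D + 1" using D by (simp add: a_def)
  ultimately have "K < EU u z" using abs_ge_self[of "K - EU u y"] D by linarith
  thus ?thesis using z(1) by blast
qed

lemma unbounded_EU_surj:
  assumes rep: "parsimonious_rep P pi0 pi1 R c u" and unb: "unbounded P R"
  shows "\<exists>x\<in>lotteries P. EU u x = k"
proof -
  obtain z1 where z1: "z1 \<in> lotteries P" "EU u z1 < k" using unbounded_EU_below[OF rep unb] by blast
  obtain z2 where z2: "z2 \<in> lotteries P" "k < EU u z2" using unbounded_EU_above[OF rep unb] by blast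
  define b where "b = (k - EU u z1) / (EU u z2 - EU u z1)"
  have b: "0 \<le> b" "b \<le> 1" using z1 z2 by (auto simp: b_def field_simps)
  have "EU u (lot_mix b z2 z1) = EU u z1 + b * (EU u z2 - EU u z1)"
    using EU_lot_mix[OF z2(1) z1(1) b] by (simp add: algebra_simps)
  also have "\<dots> = k" using z1 z2 by (simp add: b_def)
  finally show ?thesis using lot_mix_in_lotteries[OF z2(1) z1(1)] by blast
qed

lemma unbounded_utility_profile_surj:
  assumes "parsimonious_rep P pi0 pi1 R c u" "unbounded P R"
  shows "\<exists>w\<in>contracts P. utility_profile u w = a"
proof -
  define w where "w s = (SOME x. x \<in> lotteries P \<and> EU u x = a s)" for s
  have "w s \<in> lotteries P \<and> EU u (w s) = a s" for s
    unfolding w_def by (rule someI_ex) (use unbounded_EU_surj[OF assms] in blast)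
  thus ?thesis unfolding contracts_def utility_profile_def by (intro bexI[of _ w]) auto
qed

lemma parsimonious_rep_normalised_values:
  assumes "parsimonious_rep P pi0 pi1 R c u" "pi0 \<in> P" "pi1 \<in> P" "pi0 < pi1"
  shows "u pi0 = 0" "u pi1 = 1"
proof -
  have "u pi0 < u pi1" using assms unfolding parsimonious_rep_def strict_mono_on_def by blast
  moreover have "{u pi0, u pi1} = {0, 1}"
    using assms unfolding parsimonious_rep_def normalised_def by blast
  ultimately show "u pi0 = 0" "u pi1 = 1" by (auto simp: doubleton_eq_iff)
qed

lemma parsimonious_rep_EU_eq_transfer:
  assumes "parsimonious_rep P pi0 pi1 R c u" "parsimonious_rep P pi0 pi1 R c' u'"
    "x \<in> lotteries P" "y \<in> lotteries P" "EU u x = EU u y"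
  shows "EU u' x = EU u' y"
  using parsimonious_rep_const_iff_EU[OF assms(1) assms(3,4)] parsimonious_rep_const_iff_EU[OF assms(1) assms(4,3)]
    parsimonious_rep_const_iff_EU[OF assms(2) assms(3,4)] parsimonious_rep_const_iff_EU[OF assms(2) assms(4,3)]
    assms(5) by auto

text \<open>Both utilities are affine on lotteries and agree at \<open>\<delta>\<^sub>\<pi>\<^sub>0\<close> and \<open>\<delta>\<^sub>\<pi>\<^sub>1\<close>; a mixture
  of \<open>z\<close> with one of these is indifferent to the other (or \<open>z\<close> to a mixture of both), which
  pins down \<open>EU u' z\<close>.\<close>

lemma parsimonious_rep_EU_unique:
  assumes r: "parsimonious_rep P pi0 pi1 R c u" and r': "parsimonious_rep P pi0 pi1 R c' u'"
    and pi: "pi0 \<in> P" "pi1 \<in> P" "pi0 < pi1" and z: "z \<in> lotteries P"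
  shows "EU u' z = EU u z"
proof -
  note eq = parsimonious_rep_EU_eq_transfer[OF r r']
  define d0 d1 where "d0 = return_pmf pi0" and "d1 = return_pmf pi1"
  have d: "d0 \<in> lotteries P" "d1 \<in> lotteries P"
    using pi return_pmf_in_lotteries by (auto simp: d0_def d1_def)
  have vals: "EU u d0 = 0" "EU u d1 = 1" "EU u' d0 = 0" "EU u' d1 = 1"
    using parsimonious_rep_normalised_values[OF r pi] parsimonious_rep_normalised_values[OF r' pi]
    by (auto simp: d0_def d1_def EU_return_pmf)
  define k where "k = EU u z"
  consider "0 \<le> k \<and> k \<le> 1" | "k > 1" | "k < 0" by linarith
  thus ?thesis
  proof cases
    case 1
    have "EU u (lot_mix k d1 d0) = EU u z" using EU_lot_mix[OF d(2,1), of k u] 1 vals by (simp add: k_def)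
    hence "EU u' (lot_mix k d1 d0) = EU u' z" by (rule eq[OF lot_mix_in_lotteries[OF d(2,1)] z])
    thus ?thesis using EU_lot_mix[OF d(2,1), of k u'] 1 vals by (simp add: k_def)
  next
    case 2
    have "EU u (lot_mix (1/k) z d0) = EU u d1" using EU_lot_mix[OF z d(1), of "1/k" u] 2 vals by (simp add: k_def)
    hence "EU u' (lot_mix (1/k) z d0) = EU u' d1" by (rule eq[OF lot_mix_in_lotteries[OF z d(1)] d(2)])
    thus ?thesis using EU_lot_mix[OF z d(1), of "1/k" u'] 2 vals by (simp add: k_def field_simps)
  next
    case 3
    have "EU u (lot_mix (1/(1-k)) z d1) = EU u d0"
      using EU_lot_mix[OF z d(2), of "1/(1-k)" u] 3 vals by (simp add: k_def field_simps)
    hence "EU u' (lot_mix (1/(1-k)) z d1) = EU u' d0" by (rule eq[OF lot_mix_in_lotteries[OF z d(2)] d(1)])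
    thus ?thesis using EU_lot_mix[OF z d(2), of "1/(1-k)" u'] 3 vals by (simp add: k_def field_simps)
  qed
qed

lemma parsimonious_rep_utility_profile_unique:
  assumes "parsimonious_rep P pi0 pi1 R c u" "parsimonious_rep P pi0 pi1 R c' u'"
    "pi0 \<in> P" "pi1 \<in> P" "pi0 < pi1" "w \<in> contracts P"
  shows "utility_profile u' w = utility_profile u w"
  using parsimonious_rep_EU_unique[OF assms(1-5)] assms(6)
  unfolding utility_profile_def contracts_def by auto

section \<open>First-order stochastic dominance\<close>

definition upper_tail :: "('s::{finite,linorder} \<Rightarrow> real) \<Rightarrow> 's \<Rightarrow> real" where
  "upper_tail q t = (\<Sum>s\<in>{s. t \<le> s}. q s)"

lemma fosd_iff_upper_tail: "fosd q p \<longleftrightarrow> (\<forall>t. upper_tail p t \<le> upper_tail q t)"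
  unfolding fosd_def upper_tail_def by simp

text \<open>Summation by parts, peeling off the least state.\<close>

lemma sum_mult_nonneg_if_upper_tails_nonneg:
  fixes A :: "'s::linorder set" and r d :: "'s \<Rightarrow> real"
  assumes "finite A"
  shows "(\<forall>t. 0 \<le> (\<Sum>s\<in>A \<inter> {s. t \<le> s}. r s)) \<Longrightarrow> \<forall>s\<in>A. 0 \<le> d s \<Longrightarrow>
         \<forall>s\<in>A. \<forall>s'\<in>A. s \<le> s' \<longrightarrow> d s \<le> d s' \<Longrightarrow> 0 \<le> (\<Sum>s\<in>A. d s * r s)"
  using assms
proof (induction A arbitrary: d rule: finite_linorder_min_induct)
  case empty thus ?case by simp
next
  case (insert b A)
  have "insert b A \<inter> {s. b \<le> s} = insert b A" using insert.hyps by auto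
  hence total: "0 \<le> (\<Sum>s\<in>insert b A. r s)" using insert.prems(1) by metis
  have tails: "0 \<le> (\<Sum>s\<in>A \<inter> {s. t \<le> s}. r s)" for t
  proof (cases "b < t")
    case True
    hence "A \<inter> {s. t \<le> s} = insert b A \<inter> {s. t \<le> s}" by auto
    thus ?thesis using insert.prems(1) by metis
  next
    case False
    hence A: "A \<inter> {s. t \<le> s} = A" using insert.hyps by force
    show ?thesis
    proof (cases "A = {}")
      case False
      hence "Min A \<in> A" using insert.hyps(1) by simp
      hence "insert b A \<inter> {s. Min A \<le> s} = A" using insert.hyps by fastforce
      thus ?thesis using insert.prems(1) A by metis
    qed simp
  qed
  have "\<forall>s\<in>A. d b \<le> d s" using insert.prems(3) insert.hyps by (auto simp: less_imp_le)
  hence "0 \<le> (\<Sum>s\<in>A. (d s - d b) * r s)"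
    using insert.IH[of "\<lambda>s. d s - d b"] tails insert.prems(3) by auto
  moreover have "0 \<le> d b * (\<Sum>s\<in>insert b A. r s)" using insert.prems(2) total by simp
  moreover have "(\<Sum>s\<in>insert b A. d s * r s) = d b * (\<Sum>s\<in>insert b A. r s) + (\<Sum>s\<in>A. (d s - d b) * r s)"
  proof -
    have "b \<notin> A" using insert.hyps by auto
    thus ?thesis using insert.hyps(1) by (simp add: algebra_simps sum.distrib sum_distrib_left sum_subtractf)
  qed
  ultimately show ?case by simp
qed

lemma dot_mono_fosd:
  fixes p q :: "'s::{finite,linorder} \<Rightarrow> real"
  assumes "p \<in> DeltaS" "q \<in> DeltaS" "fosd q p" "mono d"
  shows "dot d p \<le> dot d q"
proof -
  define m where "m = d (Min UNIV)"
  have "0 \<le> (\<Sum>s\<in>UNIV. (d s - m) * (q s - p s))"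
    using assms(3,4) unfolding fosd_def m_def
    by (intro sum_mult_nonneg_if_upper_tails_nonneg) (auto simp: sum_subtractf monoD Int_def)
  also have "\<dots> = dot d q - dot d p - m * ((\<Sum>s\<in>UNIV. q s) - (\<Sum>s\<in>UNIV. p s))"
    unfolding dot_def by (simp add: algebra_simps sum_subtractf sum.distrib sum_distrib_left)
  also have "\<dots> = dot d q - dot d p" using assms(1,2) unfolding DeltaS_def by simp
  finally show ?thesis by simp
qed

lemma fosd_exchange:
  assumes "\<forall>t. upper_tail p' t \<le> upper_tail q t" "\<forall>s. q s + q' s = p s + p' s"
  shows "fosd p q' \<and> fosd q p' \<and> (\<lambda>s. p s / 2 + p' s / 2) = (\<lambda>s. q s / 2 + q' s / 2)"
proof -
  have q': "q' = (\<lambda>s. p s + p' s - q s)" using assms(2) by (auto simp: algebra_simps)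
  have "upper_tail q' t = upper_tail p t + upper_tail p' t - upper_tail q t" for t
    unfolding q' upper_tail_def by (simp add: sum.distrib sum_subtractf)
  hence "fosd p q'" unfolding fosd_iff_upper_tail using assms(1) by force
  thus ?thesis using assms unfolding fosd_iff_upper_tail q' by (auto simp: field_simps)
qed

definition increasing_differences :: "(('s::{finite,linorder} \<Rightarrow> real) \<Rightarrow> ereal) \<Rightarrow> (('s \<Rightarrow> real) \<Rightarrow> ereal) \<Rightarrow> bool" where
  "increasing_differences c c' \<longleftrightarrow> (\<forall>a d. mono d \<longrightarrow>
     value_fun c a + value_fun c' (\<lambda>s. a s + d s) \<le> value_fun c (\<lambda>s. a s + d s) + value_fun c' a)"

lemma up_shifted_increasing_differences:
  fixes c c' :: "('s::{finite,linorder} \<Rightarrow> real) \<Rightarrow> ereal"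
  assumes c: "proper_cost c" "proper_cost c'" and up: "up_shifted c c'"
  shows "increasing_differences c c'"
  unfolding increasing_differences_def
proof (intro allI impI)
  fix a d :: "'s \<Rightarrow> real" assume d: "mono d"
  define b where "b = (\<lambda>s. a s + d s)"
  have "value_fun c' b \<le> value_fun c b + value_fun c' a - dot a p + x"
    if p: "p \<in> DeltaS" "c p = ereal x" for p x
  proof (rule value_fun_le[OF c(2)])
    fix p' x' assume p': "p' \<in> DeltaS" "c' p' = ereal x'"
    obtain q q' where q: "q \<in> DeltaS" "q' \<in> DeltaS" "fosd p q'" "fosd q p'"
      "(\<lambda>s. p s / 2 + p' s / 2) = (\<lambda>s. q s / 2 + q' s / 2)" "c q + c' q' \<le> c p + c' p'"
      using up p(1) p'(1) unfolding up_shifted_def by blast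
    have q'_eq: "q' s = p s + p' s - q s" for s using fun_cong[OF q(5), of s] by simp
    have "0 \<le> c q" "0 \<le> c' q'" "c q + c' q' \<le> ereal (x + x')"
      using c q p p' unfolding proper_cost_def by auto
    then obtain y y' where y: "c q = ereal y" "c' q' = ereal y'" "y + y' \<le> x + x'"
      by (cases "c q"; cases "c' q'") auto
    have "dot b q - y \<le> value_fun c b" using value_fun_ge[OF c(1) q(1) y(1)] .
    moreover have "dot a q' - y' \<le> value_fun c' a" using value_fun_ge[OF c(2) q(2) y(2)] .
    moreover have "dot d p' \<le> dot d q" using dot_mono_fosd[OF p'(1) q(1) q(4) d] .
    moreover have "dot a q' = dot a p + dot a p' - dot a q" "dot b p' = dot a p' + dot d p'"
      "dot b q = dot a q + dot d q"
      unfolding dot_def b_def q'_eq by (simp_all add: algebra_simps sum.distrib sum_subtractf)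
    ultimately show "dot b p' - x' \<le> value_fun c b + value_fun c' a - dot a p + x"
      using y(3) by linarith
  qed
  hence "value_fun c a \<le> value_fun c b + value_fun c' a - value_fun c' b"
    by (intro value_fun_le[OF c(1)]) force
  thus "value_fun c a + value_fun c' b \<le> value_fun c b + value_fun c' a" by simp
qed

lemma normal_nonneg_if_upward_closed:
  fixes E :: "('a::real_inner \<times> real) set"
  assumes sep: "\<forall>y\<in>E. b < inner (l, mu) y" and x1: "(x1, v1) \<in> E"
    and up: "\<And>v. v1 \<le> v \<Longrightarrow> (x1, v) \<in> E"
  shows "0 \<le> mu"
proof (rule ccontr)
  assume "\<not> 0 \<le> mu"
  hence neg: "mu < 0" by simp
  define v where "v = max v1 ((b - inner l x1) / mu + 1)"
  have "b < inner l x1 + mu * v" using sep up[of v] by (auto simp: v_def inner_Pair)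
  moreover have "mu * v \<le> mu * ((b - inner l x1) / mu + 1)"
    using neg by (simp add: v_def mult_le_cancel_left)
  moreover have "mu * ((b - inner l x1) / mu + 1) = b - inner l x1 + mu" using neg by (simp add: field_simps)
  ultimately show False using neg by linarith
qed

text \<open>A vertical separating hyperplane is tilted using the nonnegativity of the heights.\<close>

lemma separate_point_upward_closed:
  fixes E :: "('a::euclidean_space \<times> real) set"
  assumes "convex E" "closed E"
    and up: "\<And>x v w. (x, v) \<in> E \<Longrightarrow> v \<le> w \<Longrightarrow> (x, w) \<in> E"
    and nonneg: "\<And>x v. (x, v) \<in> E \<Longrightarrow> 0 \<le> v"
    and notin: "(x0, M) \<notin> E"
  obtains l b where "\<And>x v. (x, v) \<in> E \<Longrightarrow> inner l x + b \<le> v" "M < inner l x0 + b"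
proof (cases "E = {}")
  case True
  show ?thesis by (rule that[of 0 "M + 1"]) (use True in auto)
next
  case False
  obtain n b where nb: "inner n (x0, M) < b" "\<forall>y\<in>E. b < inner n y"
    using separating_hyperplane_closed_point[OF assms(1,2) notin] by blast
  obtain l mu where n: "n = (l, mu)" by (cases n)
  obtain x1 v1 where x1: "(x1, v1) \<in> E" using False by auto
  have mu: "0 \<le> mu"
    by (rule normal_nonneg_if_upward_closed[of E b l mu x1 v1]) (use nb(2) x1 up in \<open>auto simp: n\<close>)
  have E: "b < inner l x + mu * v" if "(x, v) \<in> E" for x v
    using nb(2) that unfolding n by (auto simp: inner_Pair)
  have x0: "inner l x0 + mu * M < b" using nb(1) unfolding n by (simp add: inner_Pair)
  show ?thesis
  proof (cases "mu = 0")
    case False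
    hence mu: "0 < mu" using mu by simp
    show ?thesis
    proof (rule that[of "- l /\<^sub>R mu" "b / mu"])
      fix x v assume "(x, v) \<in> E"
      hence "b \<le> inner l x + mu * v" using E less_imp_le by blast
      thus "inner (- l /\<^sub>R mu) x + b / mu \<le> v" using mu by (simp add: field_simps)
    next
      show "M < inner (- l /\<^sub>R mu) x0 + b / mu" using x0 mu by (simp add: field_simps)
    qed
  next
    case True
    define t where "t = (\<bar>M\<bar> + 1) / (b - inner l x0)"
    have t: "0 < t" "t * (b - inner l x0) = \<bar>M\<bar> + 1" using x0 True by (auto simp: t_def)
    show ?thesis
    proof (rule that[of "- t *\<^sub>R l" "t * b"])
      fix x v assume xv: "(x, v) \<in> E"
      have "t * (b - inner l x) \<le> 0" using E[OF xv] True t(1) by (simp add: mult_nonneg_nonpos)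
      thus "inner (- t *\<^sub>R l) x + t * b \<le> v" using nonneg[OF xv] by (simp add: algebra_simps)
    next
      show "M < inner (- t *\<^sub>R l) x0 + t * b" using t(2) by (simp add: algebra_simps)
    qed
  qed
qed

section \<open>Overconfidence: comparing costs through their values\<close>

text \<open>\<open>DeltaS\<close> lives in the function space; for the separation arguments the simplex is
  transported to the Euclidean space \<open>real^'s\<close>.\<close>

definition simplex_vec :: "(real^'s::finite) set" where
  "simplex_vec = {x. vec_nth x \<in> DeltaS}"

lemma closed_simplex_vec: "closed (simplex_vec :: (real^'s::finite) set)"
proof -
  have "simplex_vec = (\<Inter>i. {x::real^'s. 0 \<le> x $ i}) \<inter> {x. (\<Sum>i\<in>UNIV. x $ i) = 1}"
    unfolding simplex_vec_def DeltaS_def by auto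
  moreover have "closed {x::real^'s. (\<Sum>i\<in>UNIV. x $ i) = 1}"
    by (intro closed_Collect_eq continuous_intros)
  moreover have "closed (\<Inter>i. {x::real^'s. 0 \<le> x $ i})"
    by (intro closed_INT ballI closed_Collect_le continuous_intros)
  ultimately show ?thesis by (metis closed_Int)
qed

lemma compact_simplex_vec: "compact (simplex_vec :: (real^'s::finite) set)"
proof -
  have "norm x \<le> real CARD('s)" if "x \<in> simplex_vec" for x :: "real^'s"
  proof -
    have "norm x \<le> (\<Sum>i\<in>UNIV. \<bar>x$i\<bar>)" by (rule norm_le_l1_cart)
    also have "\<dots> \<le> (\<Sum>i\<in>(UNIV::'s set). 1)"
      using DeltaS_le_1[of "vec_nth x"] that unfolding simplex_vec_def by (intro sum_mono) auto
    finally show ?thesis by simp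
  qed
  hence "bounded (simplex_vec :: (real^'s) set)" unfolding bounded_iff by blast
  thus ?thesis using closed_simplex_vec by (simp add: compact_eq_bounded_closed)
qed

lemma vec_nth_vec_lambda: "vec_nth (vec_lambda f) = f"
  by (rule ext) simp

lemma inner_vec_eq_dot: "inner (l::real^'s::finite) x = dot (vec_nth l) (vec_nth x)"
  unfolding inner_vec_def dot_def by simp

lemma tendsto_vec_nth_fun:
  fixes X :: "nat \<Rightarrow> real^'s" assumes "X \<longlonglongrightarrow> x"
  shows "(\<lambda>n. vec_nth (X n)) \<longlonglongrightarrow> vec_nth x"
proof -
  have "continuous_on UNIV (\<lambda>x::real^'s. vec_nth x)"
    by (rule continuous_on_coordinatewise_then_product)
       (rule linear_continuous_on[OF bounded_linear_vec_nth])
  from continuous_on_tendsto_compose[OF this assms] show ?thesis by (simp add: o_def)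
qed

lemma lsc_cost_vec:
  fixes X :: "nat \<Rightarrow> real^'s::finite"
  assumes "lsc_cost c" "X \<longlonglongrightarrow> x" "\<And>n. X n \<in> simplex_vec" "x \<in> simplex_vec"
  shows "c (vec_nth x) \<le> liminf (\<lambda>n. c (vec_nth (X n)))"
proof -
  have "\<forall>n. vec_nth (X n) \<in> DeltaS" "vec_nth x \<in> DeltaS" using assms(3,4) by (auto simp: simplex_vec_def)
  moreover have lsc_cost_tendsto: "\<forall>p\<in>DeltaS. \<forall>X. (\<forall>n. X n \<in> DeltaS) \<and> X \<longlonglongrightarrow> p \<longrightarrow> c p \<le> liminf (\<lambda>n. c (X n))"
    using assms(1) unfolding lsc_cost_def by blast
  ultimately show ?thesis
    by (intro lsc_cost_tendsto[rule_format, of "vec_nth x" "\<lambda>n. vec_nth (X n)", simplified])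
       (use tendsto_vec_nth_fun[OF assms(2)] in auto)
qed

lemma liminf_le_limit:
  fixes f :: "nat \<Rightarrow> ereal"
  assumes "\<And>n. f n \<le> ereal (v n)" "v \<longlonglongrightarrow> v0"
  shows "liminf f \<le> ereal v0"
proof -
  have "liminf f \<le> liminf (\<lambda>n. ereal (v n))" using assms(1) by (intro Liminf_mono) auto
  also have "\<dots> = ereal v0" by (rule lim_imp_Liminf) (use assms(2) in auto)
  finally show ?thesis .
qed

lemma convex_cost_le_mix:
  assumes "convex_cost c" "\<forall>p\<in>DeltaS. 0 \<le> c p" "p \<in> DeltaS" "q \<in> DeltaS"
    "c p \<le> ereal v1" "c q \<le> ereal v2" "0 \<le> t" "t \<le> 1"
  shows "c (\<lambda>s. t * p s + (1 - t) * q s) \<le> ereal (t * v1 + (1 - t) * v2)"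
proof -
  obtain y1 where y1: "c p = ereal y1" "y1 \<le> v1" using assms(2,3,5) by (cases "c p") auto
  obtain y2 where y2: "c q = ereal y2" "y2 \<le> v2" using assms(2,4,6) by (cases "c q") auto
  have "c (\<lambda>s. t * p s + (1 - t) * q s) \<le> ereal t * c p + ereal (1 - t) * c q"
    using assms(1,3,4,7,8) unfolding convex_cost_def by blast
  also have "\<dots> \<le> ereal (t * v1 + (1 - t) * v2)"
    using y1 y2 assms(7,8) by (simp add: add_mono mult_left_mono)
  finally show ?thesis .
qed

definition cost_epigraph :: "(('s::finite \<Rightarrow> real) \<Rightarrow> ereal) \<Rightarrow> ((real^'s) \<times> real) set" where
  "cost_epigraph c = {(x, v). x \<in> simplex_vec \<and> c (vec_nth x) \<le> ereal v}"

lemma convex_cost_epigraph: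
  fixes c :: "('s::finite \<Rightarrow> real) \<Rightarrow> ereal"
  assumes "convex_cost c" "\<forall>p\<in>DeltaS. 0 \<le> c p"
  shows "convex (cost_epigraph c)"
  unfolding convex_def
proof (intro ballI allI impI)
  fix e1 e2 :: "(real^'s) \<times> real" and t t' :: real
  assume "e1 \<in> cost_epigraph c" "e2 \<in> cost_epigraph c" and t: "0 \<le> t" "0 \<le> t'" "t + t' = 1"
  then obtain x1 v1 x2 v2 where e: "e1 = (x1, v1)" "e2 = (x2, v2)"
    and x: "vec_nth x1 \<in> DeltaS" "vec_nth x2 \<in> DeltaS" "c (vec_nth x1) \<le> ereal v1" "c (vec_nth x2) \<le> ereal v2"
    unfolding cost_epigraph_def simplex_vec_def by auto
  have t': "t' = 1 - t" using t(3) by simp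
  have "vec_nth (t *\<^sub>R x1 + t' *\<^sub>R x2) = (\<lambda>s. t * vec_nth x1 s + (1 - t) * vec_nth x2 s)"
    by (rule ext) (simp add: t')
  thus "t *\<^sub>R e1 + t' *\<^sub>R e2 \<in> cost_epigraph c"
    using DeltaS_mix[OF x(1,2), of t] convex_cost_le_mix[OF assms x, of t] t
    unfolding e cost_epigraph_def simplex_vec_def by (auto simp: algebra_simps t')
qed

lemma closed_cost_epigraph:
  fixes c :: "('s::finite \<Rightarrow> real) \<Rightarrow> ereal"
  assumes "lsc_cost c"
  shows "closed (cost_epigraph c)"
  unfolding closed_sequential_limits
proof (intro allI impI, elim conjE)
  fix S :: "nat \<Rightarrow> (real^'s) \<times> real" and l assume S: "\<forall>n. S n \<in> cost_epigraph c" "S \<longlonglongrightarrow> l"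
  have lim: "(\<lambda>n. fst (S n)) \<longlonglongrightarrow> fst l" "(\<lambda>n. snd (S n)) \<longlonglongrightarrow> snd l"
    using S(2) by (auto intro: tendsto_fst tendsto_snd)
  have Sn: "fst (S n) \<in> simplex_vec" "c (vec_nth (fst (S n))) \<le> ereal (snd (S n))" for n
    using S(1) unfolding cost_epigraph_def by (auto simp: case_prod_beta)
  have l: "fst l \<in> simplex_vec"
    by (rule closed_sequentially[OF closed_simplex_vec, of "\<lambda>n. fst (S n)"]) (use Sn(1) lim(1) in auto)
  have "c (vec_nth (fst l)) \<le> liminf (\<lambda>n. c (vec_nth (fst (S n))))"
    by (rule lsc_cost_vec[OF assms lim(1) Sn(1) l])
  also have "\<dots> \<le> ereal (snd l)" by (rule liminf_le_limit[OF Sn(2) lim(2)])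
  finally show "l \<in> cost_epigraph c" using l unfolding cost_epigraph_def by (auto simp: case_prod_beta)
qed

text \<open>Separating \<open>(p\<^sub>0, c' p\<^sub>0)\<close> from the epigraph of \<open>c\<close> yields a profile \<open>a\<close> with
  \<open>\<langle>a, p\<rangle> - c p \<le> - b < \<langle>a, p\<^sub>0\<rangle> - c' p\<^sub>0\<close> for all \<open>p\<close>.\<close>

lemma value_fun_less_if_cost_greater:
  fixes c c' :: "('s::finite \<Rightarrow> real) \<Rightarrow> ereal"
  assumes c: "proper_cost c" "convex_cost c" "lsc_cost c"
    and p0: "p0 \<in> DeltaS" "c' p0 = ereal M" "ereal M < c p0"
    and c': "proper_cost c'"
  shows "\<exists>a. value_fun c a < value_fun c' a"
proof -
  have nonneg: "\<forall>p\<in>DeltaS. 0 \<le> c p" using c(1) unfolding proper_cost_def by blast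
  have up: "\<And>x v w. (x, v) \<in> cost_epigraph c \<Longrightarrow> v \<le> w \<Longrightarrow> (x, w) \<in> cost_epigraph c"
    unfolding cost_epigraph_def by (auto intro: order_trans)
  have epi_nonneg: "0 \<le> v" if "(x, v) \<in> cost_epigraph c" for x v
  proof -
    have "0 \<le> c (vec_nth x)" "c (vec_nth x) \<le> ereal v"
      using nonneg that unfolding cost_epigraph_def simplex_vec_def by auto
    thus "0 \<le> v" by (metis ereal_less_eq(5) order_trans)
  qed
  have notin: "(vec_lambda p0, M) \<notin> cost_epigraph c"
    using p0 unfolding cost_epigraph_def by (auto simp: vec_nth_vec_lambda)
  obtain l b where lb: "\<And>x v. (x, v) \<in> cost_epigraph c \<Longrightarrow> inner l x + b \<le> v"
    "M < inner l (vec_lambda p0) + b"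
    by (rule separate_point_upward_closed[OF convex_cost_epigraph[OF c(2) nonneg] closed_cost_epigraph[OF c(3)]])
       (use up epi_nonneg notin in auto)
  have "value_fun c (vec_nth l) \<le> - b"
  proof (rule value_fun_le[OF c(1)])
    fix p x assume "p \<in> DeltaS" "c p = ereal x"
    hence "(vec_lambda p, x) \<in> cost_epigraph c"
      unfolding cost_epigraph_def simplex_vec_def by (simp add: vec_nth_vec_lambda)
    from lb(1)[OF this] show "dot (vec_nth l) p - x \<le> - b" by (simp add: inner_vec_eq_dot vec_nth_vec_lambda)
  qed
  moreover have "dot (vec_nth l) p0 - M \<le> value_fun c' (vec_nth l)" by (rule value_fun_ge[OF c' p0(1,2)])
  moreover have "M < dot (vec_nth l) p0 + b" using lb(2) by (simp add: inner_vec_eq_dot vec_nth_vec_lambda)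
  ultimately show ?thesis by (intro exI[of _ "vec_nth l"]) linarith
qed

lemma value_fun_le_iff_cost_ge:
  assumes c: "proper_cost c" "convex_cost c" "lsc_cost c" and c': "proper_cost c'"
  shows "(\<forall>a. value_fun c' a \<le> value_fun c a) \<longleftrightarrow> (\<forall>p\<in>DeltaS. c p \<le> c' p)"
proof
  assume le: "\<forall>a. value_fun c' a \<le> value_fun c a"
  show "\<forall>p\<in>DeltaS. c p \<le> c' p"
  proof (rule ccontr)
    assume "\<not> (\<forall>p\<in>DeltaS. c p \<le> c' p)"
    then obtain p0 where p0: "p0 \<in> DeltaS" "c' p0 < c p0" by (auto simp: not_le)
    moreover have "0 \<le> c' p0" using c' p0 unfolding proper_cost_def by auto
    ultimately obtain M where M: "c' p0 = ereal M" by (cases "c' p0") auto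
    then obtain a where "value_fun c a < value_fun c' a"
      using value_fun_less_if_cost_greater[OF c p0(1) M _ c'] p0(2) by auto
    thus False using le by (simp add: not_le[symmetric])
  qed
qed (use value_fun_antimono[OF c(1) c'] in blast)

section \<open>Optimism: up-shifts from increasing differences\<close>

text \<open>A point \<open>((y, z), v)\<close> records an exchange \<open>(q, q')\<close> of \<open>(p, p')\<close>: the upper tails of
  \<open>q\<close> exceed those of \<open>p'\<close> by at least \<open>y\<close>, \<open>z\<close> is the defect of \<open>q + q' = p + p'\<close>,
  and \<open>v\<close> bounds the cost of the exchange.\<close>

definition exchange_set :: "(('s::{finite,linorder} \<Rightarrow> real) \<Rightarrow> ereal) \<Rightarrow> (('s \<Rightarrow> real) \<Rightarrow> ereal)
    \<Rightarrow> ('s \<Rightarrow> real) \<Rightarrow> ('s \<Rightarrow> real) \<Rightarrow> ((((real, 's) vec) \<times> ((real, 's) vec)) \<times> real) set" where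
  "exchange_set c1 c2 p p' = {((y, z), v). \<exists>q q'. q \<in> DeltaS \<and> q' \<in> DeltaS \<and>
     (\<forall>t. y $ t \<le> upper_tail q t - upper_tail p' t) \<and> (\<forall>s. z $ s = q s + q' s - p s - p' s) \<and>
     c1 q + c2 q' \<le> ereal v}"

lemma exchange_setI:
  assumes "q \<in> DeltaS" "q' \<in> DeltaS" "\<forall>t. y $ t \<le> upper_tail q t - upper_tail p' t"
    "c1 q + c2 q' \<le> ereal v"
  shows "((y, vec_lambda (\<lambda>s. q s + q' s - p s - p' s)), v) \<in> exchange_set c1 c2 p p'"
  using assms unfolding exchange_set_def by auto

lemma upper_tail_mix: "upper_tail (\<lambda>s. t * p s + (1 - t) * q s) r = t * upper_tail p r + (1 - t) * upper_tail q r"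
  unfolding upper_tail_def by (simp add: sum.distrib sum_distrib_left)

lemma convex_cost_sum_le_mix:
  assumes cv: "convex_cost c1" "convex_cost c2"
    and nonneg: "\<forall>p\<in>DeltaS. 0 \<le> c1 p" "\<forall>p\<in>DeltaS. 0 \<le> c2 p"
    and q: "q1 \<in> DeltaS" "q2 \<in> DeltaS" "q1' \<in> DeltaS" "q2' \<in> DeltaS"
    and v: "c1 q1 + c2 q1' \<le> ereal v1" "c1 q2 + c2 q2' \<le> ereal v2" and t: "0 \<le> t" "t \<le> 1"
  shows "c1 (\<lambda>s. t * q1 s + (1 - t) * q2 s) + c2 (\<lambda>s. t * q1' s + (1 - t) * q2' s)
    \<le> ereal (t * v1 + (1 - t) * v2)"
proof -
  obtain a1 b1 where ab1: "c1 q1 = ereal a1" "c2 q1' = ereal b1" "a1 + b1 \<le> v1"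
    using q(1,3) v(1) nonneg by (cases "c1 q1"; cases "c2 q1'") auto
  obtain a2 b2 where ab2: "c1 q2 = ereal a2" "c2 q2' = ereal b2" "a2 + b2 \<le> v2"
    using q(2,4) v(2) nonneg by (cases "c1 q2"; cases "c2 q2'") auto
  have "c1 (\<lambda>s. t * q1 s + (1 - t) * q2 s) + c2 (\<lambda>s. t * q1' s + (1 - t) * q2' s)
      \<le> ereal (t * a1 + (1 - t) * a2) + ereal (t * b1 + (1 - t) * b2)"
    using convex_cost_le_mix[OF cv(1) nonneg(1)] convex_cost_le_mix[OF cv(2) nonneg(2)] q ab1 ab2 t
    by (intro add_mono) auto
  also have "\<dots> \<le> ereal (t * v1 + (1 - t) * v2)"
    using ab1(3) ab2(3) t mult_left_mono[of "a1 + b1" v1 t] mult_left_mono[of "a2 + b2" v2 "1 - t"]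
    by (simp add: algebra_simps)
  finally show ?thesis .
qed

lemma convex_exchange_set:
  fixes c1 c2 :: "('s::{finite,linorder} \<Rightarrow> real) \<Rightarrow> ereal"
  assumes cv: "convex_cost c1" "convex_cost c2"
    and nonneg: "\<forall>p\<in>DeltaS. 0 \<le> c1 p" "\<forall>p\<in>DeltaS. 0 \<le> c2 p"
  shows "convex (exchange_set c1 c2 p p')"
  unfolding convex_def
proof (intro ballI allI impI)
  fix e1 e2 :: "(((real, 's) vec) \<times> ((real, 's) vec)) \<times> real" and t t' :: real
  assume e1: "e1 \<in> exchange_set c1 c2 p p'" and e2: "e2 \<in> exchange_set c1 c2 p p'"
    and t: "0 \<le> t" "0 \<le> t'" "t + t' = 1"
  have t': "t' = 1 - t" using t(3) by simp
  obtain y1 z1 v1 q1 q1' where 1: "e1 = ((y1, z1), v1)" "q1 \<in> DeltaS" "q1' \<in> DeltaS"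
    "\<forall>r. y1 $ r \<le> upper_tail q1 r - upper_tail p' r" "\<forall>s. z1 $ s = q1 s + q1' s - p s - p' s"
    "c1 q1 + c2 q1' \<le> ereal v1"
    using e1 unfolding exchange_set_def by auto
  obtain y2 z2 v2 q2 q2' where 2: "e2 = ((y2, z2), v2)" "q2 \<in> DeltaS" "q2' \<in> DeltaS"
    "\<forall>r. y2 $ r \<le> upper_tail q2 r - upper_tail p' r" "\<forall>s. z2 $ s = q2 s + q2' s - p s - p' s"
    "c1 q2 + c2 q2' \<le> ereal v2"
    using e2 unfolding exchange_set_def by auto
  define q where "q = (\<lambda>s. t * q1 s + (1 - t) * q2 s)"
  define q' where "q' = (\<lambda>s. t * q1' s + (1 - t) * q2' s)"
  have cost: "c1 q + c2 q' \<le> ereal (t * v1 + t' * v2)"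
    unfolding q_def q'_def t' using convex_cost_sum_le_mix[OF cv nonneg 1(2) 2(2) 1(3) 2(3) 1(6) 2(6)] t t'
    by simp
  have qD: "q \<in> DeltaS" "q' \<in> DeltaS" unfolding q_def q'_def using DeltaS_mix 1 2 t t' by auto
  have "(t *\<^sub>R y1 + t' *\<^sub>R y2) $ r \<le> upper_tail q r - upper_tail p' r" for r
    using mult_left_mono[OF 1(4)[rule_format, of r] t(1)] mult_left_mono[OF 2(4)[rule_format, of r] t(2)]
    unfolding q_def upper_tail_mix t' by (simp add: algebra_simps)
  moreover have "(t *\<^sub>R z1 + t' *\<^sub>R z2) $ s = q s + q' s - p s - p' s" for s
    unfolding q_def q'_def t' vector_add_component vector_scaleR_component 1(5)[rule_format] 2(5)[rule_format]
    by (simp add: algebra_simps)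
  hence "t *\<^sub>R z1 + t' *\<^sub>R z2 = vec_lambda (\<lambda>s. q s + q' s - p s - p' s)" by (simp add: vec_eq_iff)
  ultimately have "((t *\<^sub>R y1 + t' *\<^sub>R y2, t *\<^sub>R z1 + t' *\<^sub>R z2), t * v1 + t' * v2) \<in> exchange_set c1 c2 p p'"
    using exchange_setI[OF qD, of "t *\<^sub>R y1 + t' *\<^sub>R y2"] cost by auto
  thus "t *\<^sub>R e1 + t' *\<^sub>R e2 \<in> exchange_set c1 c2 p p'" by (simp add: 1(1) 2(1))
qed

lemma lsc_cost_sum_le_limit:
  fixes Q Q' :: "nat \<Rightarrow> real^'s::finite"
  assumes lsc: "lsc_cost c1" "lsc_cost c2"
    and nonneg: "\<forall>p\<in>DeltaS. 0 \<le> c1 p" "\<forall>p\<in>DeltaS. 0 \<le> c2 p"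
    and Q: "\<And>n. Q n \<in> simplex_vec" "\<And>n. Q' n \<in> simplex_vec" "Q \<longlonglongrightarrow> q" "Q' \<longlonglongrightarrow> q'"
      "q \<in> simplex_vec" "q' \<in> simplex_vec"
    and v: "\<And>n. c1 (vec_nth (Q n)) + c2 (vec_nth (Q' n)) \<le> ereal (v n)" "v \<longlonglongrightarrow> v0"
  shows "c1 (vec_nth q) + c2 (vec_nth q') \<le> ereal v0"
proof -
  have "0 \<le> liminf (\<lambda>n. c1 (vec_nth (Q n)))" "0 \<le> liminf (\<lambda>n. c2 (vec_nth (Q' n)))"
    using Liminf_mono[of "\<lambda>n. 0" "\<lambda>n. c1 (vec_nth (Q n))" sequentially]
      Liminf_mono[of "\<lambda>n. 0" "\<lambda>n. c2 (vec_nth (Q' n))" sequentially] nonneg Q(1,2)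
    unfolding simplex_vec_def by (auto simp: Liminf_const)
  hence "liminf (\<lambda>n. c1 (vec_nth (Q n))) + liminf (\<lambda>n. c2 (vec_nth (Q' n)))
      \<le> liminf (\<lambda>n. c1 (vec_nth (Q n)) + c2 (vec_nth (Q' n)))"
    by (intro ereal_liminf_add_mono) auto
  also have "\<dots> \<le> ereal v0" by (rule liminf_le_limit[OF v])
  finally show ?thesis
    using add_mono[OF lsc_cost_vec[OF lsc(1) Q(3,1,5)] lsc_cost_vec[OF lsc(2) Q(4,2,6)]] by simp
qed

lemma simplex_pair_convergent_subseq:
  fixes Q Q' :: "nat \<Rightarrow> 's::finite \<Rightarrow> real"
  assumes "\<And>n. Q n \<in> DeltaS" "\<And>n. Q' n \<in> DeltaS"
  obtains q q' r where "q \<in> simplex_vec" "q' \<in> simplex_vec" "strict_mono r"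
    "(\<lambda>n. vec_lambda (Q (r n))) \<longlonglongrightarrow> q" "(\<lambda>n. vec_lambda (Q' (r n))) \<longlonglongrightarrow> q'"
proof -
  define QV where "QV n = (vec_lambda (Q n), vec_lambda (Q' n))" for n
  have "\<forall>n. QV n \<in> simplex_vec \<times> simplex_vec"
    using assms unfolding QV_def simplex_vec_def by (simp add: vec_nth_vec_lambda)
  moreover have "seq_compact (simplex_vec \<times> simplex_vec :: ((real^'s) \<times> (real^'s)) set)"
    by (intro compact_imp_seq_compact compact_Times compact_simplex_vec)
  ultimately obtain L r where L: "L \<in> simplex_vec \<times> simplex_vec" "strict_mono r" "(QV \<circ> r) \<longlonglongrightarrow> L"
    unfolding seq_compact_def by blast
  show ?thesis
  proof (rule that[of "fst L" "snd L" r])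
    show "(\<lambda>n. vec_lambda (Q (r n))) \<longlonglongrightarrow> fst L" "(\<lambda>n. vec_lambda (Q' (r n))) \<longlonglongrightarrow> snd L"
      using tendsto_fst[OF L(3)] tendsto_snd[OF L(3)] by (auto simp: QV_def o_def)
  qed (use L in auto)
qed

lemma closed_exchange_set:
  fixes c1 c2 :: "('s::{finite,linorder} \<Rightarrow> real) \<Rightarrow> ereal"
  assumes lsc: "lsc_cost c1" "lsc_cost c2"
    and nonneg: "\<forall>p\<in>DeltaS. 0 \<le> c1 p" "\<forall>p\<in>DeltaS. 0 \<le> c2 p"
  shows "closed (exchange_set c1 c2 p p')"
  unfolding closed_sequential_limits
proof (intro allI impI, elim conjE)
  fix S :: "nat \<Rightarrow> (((real, 's) vec) \<times> ((real, 's) vec)) \<times> real" and l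
  assume S: "\<forall>n. S n \<in> exchange_set c1 c2 p p'" "S \<longlonglongrightarrow> l"
  define Y Z V where "Y n = fst (fst (S n))" and "Z n = snd (fst (S n))" and "V n = snd (S n)" for n
  have "\<forall>n. \<exists>q q'. q \<in> DeltaS \<and> q' \<in> DeltaS \<and> (\<forall>t. Y n $ t \<le> upper_tail q t - upper_tail p' t) \<and>
      (\<forall>s. Z n $ s = q s + q' s - p s - p' s) \<and> c1 q + c2 q' \<le> ereal (V n)"
    using S(1) unfolding exchange_set_def Y_def Z_def V_def by (fastforce simp: case_prod_beta)
  then obtain Q Q' where QQ: "\<And>n. Q n \<in> DeltaS" "\<And>n. Q' n \<in> DeltaS"
    "\<And>n t. Y n $ t \<le> upper_tail (Q n) t - upper_tail p' t"
    "\<And>n s. Z n $ s = Q n s + Q' n s - p s - p' s" "\<And>n. c1 (Q n) + c2 (Q' n) \<le> ereal (V n)"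
    by metis
  obtain q q' r where qq: "q \<in> simplex_vec" "q' \<in> simplex_vec" "strict_mono r"
    and lim_q: "(\<lambda>n. vec_lambda (Q (r n))) \<longlonglongrightarrow> q" "(\<lambda>n. vec_lambda (Q' (r n))) \<longlonglongrightarrow> q'"
    using simplex_pair_convergent_subseq[OF QQ(1,2)] .
  have lim_qs: "(\<lambda>n. Q (r n) s) \<longlonglongrightarrow> q $ s" "(\<lambda>n. Q' (r n) s) \<longlonglongrightarrow> q' $ s" for s
    using tendsto_vec_nth[OF lim_q(1), of s] tendsto_vec_nth[OF lim_q(2), of s] by auto
  have "(S \<circ> r) \<longlonglongrightarrow> l" using LIMSEQ_subseq_LIMSEQ[OF S(2) qq(3)] .
  hence lim_S: "(\<lambda>n. Y (r n)) \<longlonglongrightarrow> fst (fst l)" "(\<lambda>n. Z (r n)) \<longlonglongrightarrow> snd (fst l)"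
    "(\<lambda>n. V (r n)) \<longlonglongrightarrow> snd l"
    unfolding Y_def Z_def V_def by (auto simp: o_def intro!: tendsto_fst tendsto_snd)
  have "fst (fst l) $ t \<le> upper_tail (vec_nth q) t - upper_tail p' t" for t
  proof (rule LIMSEQ_le[OF tendsto_vec_nth[OF lim_S(1)]])
    show "(\<lambda>n. upper_tail (Q (r n)) t - upper_tail p' t) \<longlonglongrightarrow> upper_tail (vec_nth q) t - upper_tail p' t"
      unfolding upper_tail_def by (intro tendsto_intros lim_qs)
  qed (use QQ(3) in blast)
  moreover have "snd (fst l) = vec_lambda (\<lambda>s. q $ s + q' $ s - p s - p' s)"
  proof (rule vec_eq_iff[THEN iffD2, rule_format])
    fix s
    have "(\<lambda>n. Z (r n) $ s) \<longlonglongrightarrow> q $ s + q' $ s - p s - p' s"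
      unfolding QQ(4) by (intro tendsto_intros lim_qs)
    thus "snd (fst l) $ s = vec_lambda (\<lambda>s. q $ s + q' $ s - p s - p' s) $ s"
      using LIMSEQ_unique[OF tendsto_vec_nth[OF lim_S(2)]] by simp
  qed
  moreover have "c1 (vec_nth q) + c2 (vec_nth q') \<le> ereal (snd l)"
    by (rule lsc_cost_sum_le_limit[OF lsc nonneg _ _ lim_q qq(1,2) _ lim_S(3)])
       (use QQ(1,2,5) in \<open>auto simp: simplex_vec_def vec_nth_vec_lambda\<close>)
  ultimately have "((fst (fst l), snd (fst l)), snd l) \<in> exchange_set c1 c2 p p'"
    using exchange_setI[of "vec_nth q" "vec_nth q'" "fst (fst l)" p' c1 c2 "snd l" p] qq(1,2)
    unfolding simplex_vec_def by auto
  thus "l \<in> exchange_set c1 c2 p p'" by simp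
qed

definition partial_sums :: "('s::{finite,linorder} \<Rightarrow> real) \<Rightarrow> 's \<Rightarrow> real" where
  "partial_sums l s = (\<Sum>t\<in>{t. t \<le> s}. l t)"

lemma mono_partial_sums: "(\<And>t. 0 \<le> l t) \<Longrightarrow> mono (partial_sums l)"
  unfolding mono_def partial_sums_def by (intro allI impI sum_mono2) auto

lemma sum_mult_upper_tail: "(\<Sum>t\<in>UNIV. l t * upper_tail q t) = dot (partial_sums l) q"
proof -
  have "(\<Sum>t\<in>UNIV. l t * upper_tail q t) = (\<Sum>t\<in>UNIV. \<Sum>s\<in>UNIV. if t \<le> s then l t * q s else 0)"
    unfolding upper_tail_def by (simp add: sum_distrib_left sum.If_cases Int_def)
  also have "\<dots> = (\<Sum>s\<in>UNIV. \<Sum>t\<in>UNIV. if t \<le> s then l t * q s else 0)" by (rule sum.swap)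
  also have "\<dots> = dot (partial_sums l) q"
    unfolding dot_def partial_sums_def by (simp add: sum_distrib_right sum.If_cases Int_def)
  finally show ?thesis .
qed

lemma nonneg_if_bounded_on_translated_cone:
  fixes l y0 :: "real^'n"
  assumes "\<And>k. (\<forall>t. 0 \<le> k $ t) \<Longrightarrow> inner l (y0 - k) \<le> C"
  shows "0 \<le> l $ t0"
proof (rule ccontr)
  assume "\<not> 0 \<le> l $ t0"
  hence neg: "l $ t0 < 0" by simp
  define m where "m = (\<bar>inner l y0\<bar> + \<bar>C\<bar> + 1) / (- l $ t0)"
  define k where "k = (\<chi> t. if t = t0 then m else 0)"
  have "0 \<le> m" using neg unfolding m_def by (intro divide_nonneg_pos) auto
  hence "inner l (y0 - k) \<le> C" using assms[of k] by (simp add: k_def)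
  moreover have "inner l k = - (\<bar>inner l y0\<bar> + \<bar>C\<bar> + 1)"
    using neg unfolding k_def inner_vec_def m_def by (simp add: if_distrib cong: if_cong)
  ultimately show False by (simp add: inner_diff_right)
qed

lemma tail_weights_nonneg_if_exchange_set_above:
  fixes ly lz :: "(real, 's::{finite,linorder}) vec"
  assumes p: "p \<in> DeltaS" "p' \<in> DeltaS" "c1 p + c2 p' \<le> ereal x"
    and above: "\<And>y z v. ((y, z), v) \<in> exchange_set c1 c2 p p' \<Longrightarrow> inner ly y + inner lz z + b \<le> v"
  shows "0 \<le> ly $ t"
proof (rule nonneg_if_bounded_on_translated_cone)
  fix k :: "(real, 's) vec" assume "\<forall>t. 0 \<le> k $ t"
  hence "((vec_lambda (\<lambda>t. upper_tail p t - upper_tail p' t) - k, vec_lambda (\<lambda>s. p s + p' s - p s - p' s)), x)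
      \<in> exchange_set c1 c2 p p'"
    by (intro exchange_setI) (use p in auto)
  from above[OF this]
  show "inner ly (vec_lambda (\<lambda>t. upper_tail p t - upper_tail p' t) - k) \<le> x - b"
    by (simp add: inner_vec_def)
qed

lemma value_sum_le_if_exchange_set_above:
  fixes ly lz :: "(real, 's::{finite,linorder}) vec"
  assumes c: "proper_cost c1" "proper_cost c2"
    and above: "\<And>y z v. ((y, z), v) \<in> exchange_set c1 c2 p p' \<Longrightarrow> inner ly y + inner lz z + b \<le> v"
  shows "value_fun c1 (\<lambda>s. vec_nth lz s + partial_sums (vec_nth ly) s) + value_fun c2 (vec_nth lz)
    \<le> dot (partial_sums (vec_nth ly)) p' + dot (vec_nth lz) p + dot (vec_nth lz) p' - b"
    (is "value_fun c1 ?b + value_fun c2 ?a \<le> ?K")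
proof -
  let ?d = "partial_sums (vec_nth ly)"
  have key: "dot ?b q - y1 + (dot ?a q' - y2) \<le> ?K"
    if q: "q \<in> DeltaS" "q' \<in> DeltaS" "c1 q = ereal y1" "c2 q' = ereal y2" for q q' y1 y2
  proof -
    have "((vec_lambda (\<lambda>t. upper_tail q t - upper_tail p' t), vec_lambda (\<lambda>s. q s + q' s - p s - p' s)), y1 + y2)
        \<in> exchange_set c1 c2 p p'"
      by (intro exchange_setI) (use q in auto)
    from above[OF this]
    have "inner ly (vec_lambda (\<lambda>t. upper_tail q t - upper_tail p' t))
        + inner lz (vec_lambda (\<lambda>s. q s + q' s - p s - p' s)) + b \<le> y1 + y2" .
    moreover have "inner ly (vec_lambda (\<lambda>t. upper_tail q t - upper_tail p' t)) = dot ?d q - dot ?d p'"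
      unfolding inner_vec_def sum_mult_upper_tail[symmetric] by (simp add: algebra_simps sum_subtractf)
    moreover have "inner lz (vec_lambda (\<lambda>s. q s + q' s - p s - p' s)) = dot ?a q + dot ?a q' - dot ?a p - dot ?a p'"
      unfolding inner_vec_def dot_def by (simp add: algebra_simps sum.distrib sum_subtractf)
    moreover have "dot ?b q = dot ?a q + dot ?d q" unfolding dot_def by (simp add: algebra_simps sum.distrib)
    ultimately show ?thesis by linarith
  qed
  have "value_fun c1 ?b \<le> ?K - value_fun c2 ?a"
  proof (rule value_fun_le[OF c(1)])
    fix q y1 assume q: "q \<in> DeltaS" "c1 q = ereal y1"
    have "value_fun c2 ?a \<le> ?K - (dot ?b q - y1)"
      by (rule value_fun_le[OF c(2)]) (use key[OF q(1) _ q(2)] in force)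
    thus "dot ?b q - y1 \<le> ?K - value_fun c2 ?a" by linarith
  qed
  thus ?thesis by simp
qed

lemma exchange_set_separation:
  fixes c1 c2 :: "('s::{finite,linorder} \<Rightarrow> real) \<Rightarrow> ereal"
  assumes c1: "proper_cost c1" "convex_cost c1" "lsc_cost c1"
    and c2: "proper_cost c2" "convex_cost c2" "lsc_cost c2"
    and notin: "((0, 0), x) \<notin> exchange_set c1 c2 p p'"
  obtains ly lz b where "\<And>y z v. ((y, z), v) \<in> exchange_set c1 c2 p p' \<Longrightarrow> inner ly y + inner lz z + b \<le> v"
    "x < b"
proof -
  have nonneg: "\<forall>p\<in>DeltaS. 0 \<le> c1 p" "\<forall>p\<in>DeltaS. 0 \<le> c2 p"
    using c1(1) c2(1) unfolding proper_cost_def by auto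
  have up: "\<And>e v w. (e, v) \<in> exchange_set c1 c2 p p' \<Longrightarrow> v \<le> w \<Longrightarrow> (e, w) \<in> exchange_set c1 c2 p p'"
    unfolding exchange_set_def by (force intro: order_trans)
  have set_nonneg: "0 \<le> v" if ev: "(e, v) \<in> exchange_set c1 c2 p p'" for e v
  proof -
    obtain q q' where "q \<in> DeltaS" "q' \<in> DeltaS" "c1 q + c2 q' \<le> ereal v"
      using ev unfolding exchange_set_def by (cases e) auto
    moreover from calculation have "0 \<le> c1 q + c2 q'" using nonneg by auto
    ultimately show "0 \<le> v" by (metis ereal_less_eq(5) order_trans)
  qed
  obtain l b where sep: "\<And>e v. (e, v) \<in> exchange_set c1 c2 p p' \<Longrightarrow> inner l e + b \<le> v"
    "x < inner l (0, 0) + b"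
    by (rule separate_point_upward_closed[OF convex_exchange_set[OF c1(2) c2(2) nonneg]
          closed_exchange_set[OF c1(3) c2(3) nonneg]]) (use up set_nonneg notin in auto)
  obtain ly lz where l: "l = (ly, lz)" by (cases l)
  show ?thesis
  proof (rule that[of ly lz b])
    show "\<And>y z v. ((y, z), v) \<in> exchange_set c1 c2 p p' \<Longrightarrow> inner ly y + inner lz z + b \<le> v"
      using sep(1) unfolding l by (fastforce simp: inner_Pair)
  qed (use sep(2) l in simp)
qed

text \<open>If no cheap exchange existed, separating \<open>((0, 0), c\<^sub>1 p + c\<^sub>2 p')\<close> from the exchange
  set would produce an increasing direction \<open>d\<close> along which the increasing-differences
  inequality fails.\<close>

lemma exchange_if_increasing_differences:
  fixes c1 c2 :: "('s::{finite,linorder} \<Rightarrow> real) \<Rightarrow> ereal"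
  assumes c1: "proper_cost c1" "convex_cost c1" "lsc_cost c1"
    and c2: "proper_cost c2" "convex_cost c2" "lsc_cost c2"
    and inc: "increasing_differences c1 c2"
    and p: "p \<in> DeltaS" "p' \<in> DeltaS" "c1 p = ereal x1" "c2 p' = ereal x2"
  shows "\<exists>q\<in>DeltaS. \<exists>q'\<in>DeltaS. (\<forall>t. upper_tail p' t \<le> upper_tail q t) \<and> (\<forall>s. q s + q' s = p s + p' s)
          \<and> c1 q + c2 q' \<le> ereal (x1 + x2)"
proof (rule ccontr)
  assume no_exchange: "\<not> ?thesis"
  have "((0, 0), x1 + x2) \<notin> exchange_set c1 c2 p p'"
  proof
    assume "((0, 0), x1 + x2) \<in> exchange_set c1 c2 p p'"
    then obtain q q' where "q \<in> DeltaS" "q' \<in> DeltaS" "\<forall>t. 0 \<le> upper_tail q t - upper_tail p' t"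
      "\<forall>s. 0 = q s + q' s - p s - p' s" "c1 q + c2 q' \<le> ereal (x1 + x2)"
      unfolding exchange_set_def by auto
    moreover from calculation have "\<forall>t. upper_tail p' t \<le> upper_tail q t" "\<forall>s. q s + q' s = p s + p' s"
      by (auto simp: algebra_simps)
    ultimately show False using no_exchange by blast
  qed
  then obtain ly lz b where above:
      "\<And>y z v. ((y, z), v) \<in> exchange_set c1 c2 p p' \<Longrightarrow> inner ly y + inner lz z + b \<le> v"
    and b: "x1 + x2 < b"
    by (rule exchange_set_separation[OF c1 c2]) blast
  define a d where "a = vec_nth lz" and "d = partial_sums (vec_nth ly)"
  have "c1 p + c2 p' \<le> ereal (x1 + x2)" using p by simp
  hence "mono d" unfolding d_def
    using tail_weights_nonneg_if_exchange_set_above[OF p(1,2) _ above] by (blast intro: mono_partial_sums)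
  hence "value_fun c1 a + value_fun c2 (\<lambda>s. a s + d s) \<le> value_fun c1 (\<lambda>s. a s + d s) + value_fun c2 a"
    using inc unfolding increasing_differences_def by blast
  also have "\<dots> \<le> dot d p' + dot a p + dot a p' - b"
    using value_sum_le_if_exchange_set_above[OF c1(1) c2(1) above] unfolding a_def d_def .
  finally have "dot a p - x1 + (dot (\<lambda>s. a s + d s) p' - x2) \<le> dot d p' + dot a p + dot a p' - b"
    using value_fun_ge[OF c1(1) p(1,3), of a] value_fun_ge[OF c2(1) p(2,4), of "\<lambda>s. a s + d s"] by linarith
  moreover have "dot (\<lambda>s. a s + d s) p' = dot a p' + dot d p'" unfolding dot_def by (simp add: algebra_simps sum.distrib)
  ultimately show False using b by simp
qed

lemma up_shifted_if_increasing_differences: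
  fixes c c' :: "('s::{finite,linorder} \<Rightarrow> real) \<Rightarrow> ereal"
  assumes "proper_cost c" "convex_cost c" "lsc_cost c"
    and "proper_cost c'" "convex_cost c'" "lsc_cost c'"
    and "increasing_differences c c'"
  shows "up_shifted c c'"
  unfolding up_shifted_def
proof (intro ballI)
  fix p p' :: "'s \<Rightarrow> real" assume p: "p \<in> DeltaS" "p' \<in> DeltaS"
  show "\<exists>q\<in>DeltaS. \<exists>q'\<in>DeltaS. fosd p q' \<and> fosd q p' \<and>
      (\<lambda>s. p s / 2 + p' s / 2) = (\<lambda>s. q s / 2 + q' s / 2) \<and> c q + c' q' \<le> c p + c' p'"
  proof (cases "c p < \<infinity> \<and> c' p' < \<infinity>")
    case True
    then obtain x1 x2 where x: "c p = ereal x1" "c' p' = ereal x2"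
      using proper_cost_finite[OF assms(1) p(1)] proper_cost_finite[OF assms(4) p(2)] by blast
    then obtain q q' where q: "q \<in> DeltaS" "q' \<in> DeltaS" "\<forall>t. upper_tail p' t \<le> upper_tail q t"
      "\<forall>s. q s + q' s = p s + p' s" "c q + c' q' \<le> ereal (x1 + x2)"
      using exchange_if_increasing_differences[OF assms p] by blast
    have "c q + c' q' \<le> c p + c' p'" using q(5) x by simp
    thus ?thesis using fosd_exchange[OF q(3,4)] q(1,2) by blast
  next
    case False
    hence "c p + c' p' = \<infinity>" using assms(1,4) p unfolding proper_cost_def by (auto simp: not_less)
    thus ?thesis using p unfolding fosd_def by (intro bexI[of _ p'] bexI[of _ p]) (auto simp: add.commute)
  qed
qed

lemma up_shifted_iff_increasing_differences:
  fixes c c' :: "('s::{finite,linorder} \<Rightarrow> real) \<Rightarrow> ereal"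
  assumes "proper_cost c" "convex_cost c" "lsc_cost c"
    and "proper_cost c'" "convex_cost c'" "lsc_cost c'"
  shows "up_shifted c c' \<longleftrightarrow> increasing_differences c c'"
  using up_shifted_increasing_differences[OF assms(1,4)] up_shifted_if_increasing_differences[OF assms]
  by blast

lemma rep_pref_iff_value_fun_of_parsimonious_rep:
  assumes rep: "parsimonious_rep P pi0 pi1 R c u" and rep': "parsimonious_rep P pi0 pi1 R c' u'"
    and pi: "pi0 \<in> P" "pi1 \<in> P" "pi0 < pi1" and cstar: "proper_cost cstar"
    and w: "w \<in> contracts P" "w' \<in> contracts P"
  shows "rep_pref cstar u' w w' \<longleftrightarrow>
    value_fun cstar (utility_profile u w') \<le> value_fun cstar (utility_profile u w)"
  using rep_pref_iff_value_fun[OF cstar] parsimonious_rep_utility_profile_unique[OF rep rep' pi w(1)]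
    parsimonious_rep_utility_profile_unique[OF rep rep' pi w(2)] by simp

lemma value_fun_le_if_overconfident:
  assumes pi: "pi0 \<in> P" "pi1 \<in> P" "pi0 < pi1" and cstar: "admissible_cost cstar"
    and rep: "parsimonious_rep P pi0 pi1 R c u" and unb: "unbounded P R"
    and oc: "overconfident P pi0 pi1 R cstar"
  shows "value_fun cstar a \<le> value_fun c a"
proof (rule ccontr)
  assume "\<not> value_fun cstar a \<le> value_fun c a"
  hence a: "value_fun c a < value_fun cstar a" by simp
  have c: "admissible_cost c" using rep unfolding parsimonious_rep_def by blast
  note R = parsimonious_rep_iff_value_fun[OF rep]
  note Rstar = rep_pref_iff_value_fun_of_parsimonious_rep[OF rep rep pi admissible_cost_proper[OF cstar]]
  note const = utility_profile_const value_fun_const[OF c] value_fun_const[OF cstar]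
  obtain w where w: "w \<in> contracts P" "utility_profile u w = a"
    using unbounded_utility_profile_surj[OF rep unb] by blast
  obtain x where x: "x \<in> lotteries P" "EU u x = value_fun c a" using unbounded_EU_surj[OF rep unb] by blast
  note cx = const_contract_in_contracts[OF x(1)]
  have "strict_pref (rep_pref cstar u) w (const_contract x)"
    unfolding strict_pref_def using Rstar[OF w(1) cx] Rstar[OF cx w(1)] a w(2) x(2) by (simp add: const)
  hence "strict_pref R w (const_contract x)"
    using oc rep w(1) x(1) unfolding overconfident_def more_confident_def by blast
  thus False unfolding strict_pref_def using R[OF w(1) cx] R[OF cx w(1)] w(2) x(2) by (simp add: const)
qed

lemma overconfident_if_value_fun_le:
  assumes pi: "pi0 \<in> P" "pi1 \<in> P" "pi0 < pi1" and cstar: "admissible_cost cstar"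
    and rep: "parsimonious_rep P pi0 pi1 R c u"
    and le: "\<And>a. value_fun cstar a \<le> value_fun c a"
  shows "overconfident P pi0 pi1 R cstar"
  unfolding overconfident_def more_confident_def
proof (intro allI impI ballI conjI)
  fix c' u' x and w :: "'a \<Rightarrow> real pmf"
  assume rep': "parsimonious_rep P pi0 pi1 R c' u'" and w: "w \<in> contracts P" and x: "x \<in> lotteries P"
  have c: "admissible_cost c" using rep unfolding parsimonious_rep_def by blast
  note R = parsimonious_rep_iff_value_fun[OF rep]
  note Rstar = rep_pref_iff_value_fun_of_parsimonious_rep[OF rep rep' pi admissible_cost_proper[OF cstar]]
  note const = utility_profile_const value_fun_const[OF c] value_fun_const[OF cstar]
  note cx = const_contract_in_contracts[OF x]
  show "rep_pref cstar u' w (const_contract x) \<Longrightarrow> R w (const_contract x)"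
    using Rstar[OF w cx] R[OF w cx] le[of "utility_profile u w"] by (simp add: const)
  show "strict_pref (rep_pref cstar u') w (const_contract x) \<Longrightarrow> strict_pref R w (const_contract x)"
    unfolding strict_pref_def using Rstar[OF w cx] Rstar[OF cx w] R[OF w cx] R[OF cx w] le[of "utility_profile u w"]
    by (simp add: const)
qed

lemma increasing_differences_if_optimistic:
  assumes pi: "pi0 \<in> P" "pi1 \<in> P" "pi0 < pi1" and cstar: "admissible_cost cstar"
    and rep: "parsimonious_rep P pi0 pi1 R c u" and unb: "unbounded P R"
    and op: "optimistic P pi0 pi1 R cstar"
  shows "increasing_differences c cstar"
  unfolding increasing_differences_def
proof (intro allI impI)
  fix a d :: "'a \<Rightarrow> real" assume d: "mono d"
  have c: "proper_cost c" "proper_cost cstar"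
    using rep cstar admissible_cost_proper unfolding parsimonious_rep_def by auto
  note R = parsimonious_rep_iff_value_fun[OF rep]
  note Rstar = rep_pref_iff_value_fun_of_parsimonious_rep[OF rep rep pi c(2)]
  define b where "b = (\<lambda>s. a s + d s)"
  define k where "k = value_fun cstar a - value_fun cstar b"
  obtain w where w: "w \<in> contracts P" "utility_profile u w = (\<lambda>s. b s + k)"
    using unbounded_utility_profile_surj[OF rep unb] by blast
  obtain w' where w': "w' \<in> contracts P" "utility_profile u w' = a"
    using unbounded_utility_profile_surj[OF rep unb] by blast
  have "steeper R w w'"
    using d steeper_iff_mono_diff[OF rep w(1) w'(1)] unfolding w(2) w'(2) b_def mono_def by auto
  moreover have "rep_pref cstar u w w'"
    using Rstar[OF w(1) w'(1)] value_fun_add_const[OF c(2), of b k] unfolding w(2) w'(2) k_def by simp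
  ultimately have "R w w'" using op rep w(1) w'(1) unfolding optimistic_def more_optimistic_def by blast
  hence "value_fun c a \<le> value_fun c b + k"
    using R[OF w(1) w'(1)] value_fun_add_const[OF c(1), of b k] unfolding w(2) w'(2) by simp
  thus "value_fun c a + value_fun cstar b \<le> value_fun c b + value_fun cstar a" unfolding k_def by simp
qed

lemma optimistic_if_increasing_differences:
  assumes pi: "pi0 \<in> P" "pi1 \<in> P" "pi0 < pi1" and cstar: "admissible_cost cstar"
    and rep: "parsimonious_rep P pi0 pi1 R c u" and inc: "increasing_differences c cstar"
  shows "optimistic P pi0 pi1 R cstar"
  unfolding optimistic_def more_optimistic_def
proof (intro allI impI ballI conjI)
  fix c' u' and w w' :: "'a \<Rightarrow> real pmf"
  assume rep': "parsimonious_rep P pi0 pi1 R c' u'" and w: "w \<in> contracts P" "w' \<in> contracts P"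
    and "steeper R w w'"
  note R = parsimonious_rep_iff_value_fun[OF rep]
  note Rstar = rep_pref_iff_value_fun_of_parsimonious_rep[OF rep rep' pi admissible_cost_proper[OF cstar]]
  let ?a = "utility_profile u w'" and ?d = "\<lambda>s. utility_profile u w s - utility_profile u w' s"
  have "mono ?d" using steeper_iff_mono_diff[OF rep w] \<open>steeper R w w'\<close> by simp
  with inc have "value_fun c ?a + value_fun cstar (\<lambda>s. ?a s + ?d s)
      \<le> value_fun c (\<lambda>s. ?a s + ?d s) + value_fun cstar ?a"
    unfolding increasing_differences_def by blast
  hence ineq: "value_fun c (utility_profile u w') + value_fun cstar (utility_profile u w)
      \<le> value_fun c (utility_profile u w) + value_fun cstar (utility_profile u w')"
    by simp
  show "rep_pref cstar u' w w' \<Longrightarrow> R w w'"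
    using Rstar[OF w] R[OF w] ineq by linarith
  show "strict_pref (rep_pref cstar u') w w' \<Longrightarrow> strict_pref R w w'"
    unfolding strict_pref_def using Rstar[OF w] Rstar[OF w(2,1)] R[OF w] R[OF w(2,1)] ineq by linarith
qed

theorem corollary1:
  fixes Prizes :: "real set" and pi0 pi1 :: real
    and R :: "('s::{finite,linorder} \<Rightarrow> real pmf) \<Rightarrow> ('s \<Rightarrow> real pmf) \<Rightarrow> bool"
    and c cstar :: "('s \<Rightarrow> real) \<Rightarrow> ereal" and u :: "real \<Rightarrow> real"
  assumes "convex Prizes" and "pi0 \<in> Prizes" and "pi1 \<in> Prizes" and "pi0 < pi1"
    and "admissible_cost cstar"
    and "parsimonious_rep Prizes pi0 pi1 R c u"
    and "unbounded Prizes R"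
  shows "(overconfident Prizes pi0 pi1 R cstar \<longleftrightarrow> (\<forall>p\<in>DeltaS. c p \<le> cstar p))
       \<and> (optimistic Prizes pi0 pi1 R cstar \<longleftrightarrow> up_shifted c cstar)"
proof -
  have "admissible_cost c" using assms(6) unfolding parsimonious_rep_def by blast
  hence c: "proper_cost c" "convex_cost c" "lsc_cost c"
    and cstar: "proper_cost cstar" "convex_cost cstar" "lsc_cost cstar"
    using assms(5) admissible_cost_proper unfolding admissible_cost_def by auto
  have "overconfident Prizes pi0 pi1 R cstar \<longleftrightarrow> (\<forall>a. value_fun cstar a \<le> value_fun c a)"
    using value_fun_le_if_overconfident[OF assms(2-7)] overconfident_if_value_fun_le[OF assms(2-6)] by blast
  moreover have "optimistic Prizes pi0 pi1 R cstar \<longleftrightarrow> increasing_differences c cstar"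
    using increasing_differences_if_optimistic[OF assms(2-7)] optimistic_if_increasing_differences[OF assms(2-6)]
    by blast
  ultimately show ?thesis
    using value_fun_le_iff_cost_ge[OF c cstar(1)] up_shifted_iff_increasing_differences[OF c cstar] by simp
qed

end
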